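(* Let $\rho=(r_n)_n$ be an increasing sequence in $[0,1)$ with $r_n\to 1$. For any sequence $(\gamma_k)_k$ of positive real numbers with $\limsup_k\gamma_k^{1/k}\le1$, there exists $f(z)=\sum_{k=0}^\infty a_kz^k$ in $\mathcal{U}_A(\mathbb{D},\rho)$ with $|a_k|\ge\gamma_k$ for every $k$ large enough. In particular, there exist Abel universal functions without Hadamard–Ostrowski gaps.
   Context: $\mathbb{D}$ is the open unit disc, $\mathbb{T}$ the unit circle. For $f\in H(\mathbb{D})$, $f_r(z):=f(rz)$; $\mathcal{U}_A(\mathbb{D},\rho)$ is the set of $f\in H(\mathbb{D})$ such that for every compact $K\subset\mathbb{T}$, $K\neq\mathbb{T}$, and every continuous $\varphi$ on $K$ there is an increasing sequence $(n_k)$ with $\sup_{\zeta\in K}|f_{r_{n_k}}(\zeta)-\varphi(\zeta)|\to0$. Abel universal functions are the elements of $\mathcal{U}_A(\mathbb{D})=\bigcup_\rho\mathcal{U}_A(\mathbb{D},\rho)$. A power series $\sum_k a_kz^k$ with radius of convergence $1$ has Hadamard–Ostrowski gaps if there are sequences $(p_k),(q_k)$ in $\mathbb{N}$ with $1\le p_1<q_1\le p_2<q_2\le\cdots$ and $\inf_k q_k/p_k>1$ such that $\limsup_{k\in I,k\to\infty}|a_k|^{1/k}<1$, where $I=\bigcup_k\{p_k+1,\dots,q_k\}$. *)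

theory Defs
  imports "HOL-Analysis.Analysis" "HOL-Library.Liminf_Limsup"
begin

definition admissible_radii :: "(nat \<Rightarrow> real) \<Rightarrow> bool" where
  "admissible_radii r \<longleftrightarrow> incseq r \<and> (\<forall>n. 0 \<le> r n \<and> r n < 1) \<and> r \<longlonglongrightarrow> 1"

definition abel_universal_rho :: "(nat \<Rightarrow> real) \<Rightarrow> (complex \<Rightarrow> complex) \<Rightarrow> bool" where
  "abel_universal_rho r f \<longleftrightarrow> f holomorphic_on ball 0 1 \<and>
     (\<forall>K \<phi>. compact K \<and> K \<subseteq> sphere 0 1 \<and> K \<noteq> sphere 0 1 \<and> continuous_on K \<phi> \<longrightarrow>
        (\<exists>n::nat \<Rightarrow> nat. strict_mono n \<and>
           uniform_limit K (\<lambda>k \<zeta>. f (complex_of_real (r (n k)) * \<zeta>)) \<phi> sequentially))"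

definition abel_universal :: "(complex \<Rightarrow> complex) \<Rightarrow> bool" where
  "abel_universal f \<longleftrightarrow> (\<exists>r. admissible_radii r \<and> abel_universal_rho r f)"

text \<open>Hadamard-Ostrowski gaps of a coefficient sequence (indices p_1, q_1, ... are shifted to
  start at 0).\<close>
definition has_HO_gaps :: "(nat \<Rightarrow> complex) \<Rightarrow> bool" where
  "has_HO_gaps a \<longleftrightarrow> conv_radius a = 1 \<and>
     (\<exists>p q :: nat \<Rightarrow> nat. 1 \<le> p 0 \<and> (\<forall>k. p k < q k \<and> q k \<le> p (Suc k)) \<and>
        (INF k. real (q k) / real (p k)) > 1 \<and>
        Limsup (inf sequentially (principal (\<Union>k. {p k <.. q k})))
               (\<lambda>k. ereal (root k (norm (a k)))) < 1)"

end

theory Submission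
  imports Defs "HOL-Complex_Analysis.Complex_Analysis"
    "HOL-Computational_Algebra.Fundamental_Theorem_Algebra"
begin

text \<open>The function is built block by block, \<open>f = \<Sum>j. z ^ D j * H j\<close>, with every coefficient of
  modulus below \<open>\<gamma> k\<close> raised by \<open>2 \<gamma> k\<close>. A countable family of targets (Gaussian rational
  polynomials on the circle minus a rational disc) is enumerated so that each target recurs
  infinitely often. The block \<open>H j\<close> is small on the disc of radius \<open>r (n (j - 1))\<close> and corrects the
  partial sum on \<open>r (n j) K j\<close> to the \<open>j\<close>-th target; all later blocks barely change the sum there,
  and neither do the raised coefficients beyond \<open>D j\<close>, as \<open>\<Sum>k. \<gamma> k * t ^ k\<close> converges for
  \<open>t < 1\<close>. Such \<open>H j\<close> exist by Runge's theorem for a disc together with a proper compact subset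
  of a larger circle, which follows from Mergelyan's theorem on the circle (Stone-Weierstrass, after
  pushing the pole of \<open>1 / z = cnj z\<close> to infinity) and a polynomial approximating
  \<open>z ^ N / (z ^ N - s ^ N)\<close>. For \<open>\<gamma> = 1\<close> all coefficients have modulus at least 1, which rules
  out Hadamard-Ostrowski gaps.\<close>

section \<open>Polynomial approximation on compact sets\<close>

definition poly_approximable :: "complex set \<Rightarrow> (complex \<Rightarrow> complex) \<Rightarrow> bool" where
  "poly_approximable S g \<longleftrightarrow> (\<forall>e>0. \<exists>p. \<forall>z\<in>S. cmod (g z - poly p z) < e)"

lemma poly_approximable_poly: "poly_approximable S (poly p)"
  unfolding poly_approximable_def by (metis diff_self norm_zero)

lemma poly_approximable_cong:
  "poly_approximable S g \<Longrightarrow> (\<And>z. z \<in> S \<Longrightarrow> g z = h z) \<Longrightarrow> poly_approximable S h"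
  unfolding poly_approximable_def by auto

lemma poly_approximable_const: "poly_approximable S (\<lambda>z. c)"
  by (rule poly_approximable_cong[OF poly_approximable_poly[of S "[:c:]"]]) simp

lemma poly_approximable_ident: "poly_approximable S (\<lambda>z. z)"
  by (rule poly_approximable_cong[OF poly_approximable_poly[of S "[:0, 1:]"]]) simp

lemma poly_approximable_uniform_closure:
  assumes "\<And>e. e > 0 \<Longrightarrow> \<exists>h. poly_approximable S h \<and> (\<forall>z\<in>S. cmod (g z - h z) \<le> e)"
  shows "poly_approximable S g"
  unfolding poly_approximable_def
proof (intro allI impI)
  fix e :: real assume "e > 0"
  then obtain h where h: "poly_approximable S h" "\<forall>z\<in>S. cmod (g z - h z) \<le> e/2"
    using assms[of "e/2"] by auto
  then obtain p where p: "\<forall>z\<in>S. cmod (h z - poly p z) < e/2"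
    using \<open>e > 0\<close> unfolding poly_approximable_def by (meson half_gt_zero)
  have "cmod (g z - poly p z) < e" if "z \<in> S" for z
  proof -
    have "cmod (g z - poly p z) \<le> cmod (g z - h z) + cmod (h z - poly p z)"
      by (rule norm_diff_triangle_le) auto
    with h(2) p that show ?thesis by fastforce
  qed
  then show "\<exists>p. \<forall>z\<in>S. cmod (g z - poly p z) < e" by blast
qed

lemma poly_approximable_add:
  assumes "poly_approximable S g" "poly_approximable S h"
  shows "poly_approximable S (\<lambda>z. g z + h z)"
  unfolding poly_approximable_def
proof (intro allI impI)
  fix e :: real assume "e > 0"
  obtain p q where "\<forall>z\<in>S. cmod (g z - poly p z) < e/2" "\<forall>z\<in>S. cmod (h z - poly q z) < e/2"
    using assms \<open>e > 0\<close> unfolding poly_approximable_def by (meson half_gt_zero)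
  then have "\<forall>z\<in>S. cmod (g z + h z - poly (p + q) z) < e"
    using norm_add_less[of "g _ - poly p _" "e/2" "h _ - poly q _" "e/2"]
    by (simp add: add_diff_add)
  then show "\<exists>p. \<forall>z\<in>S. cmod (g z + h z - poly p z) < e" ..
qed

lemma poly_approximable_cmult:
  assumes "poly_approximable S g"
  shows "poly_approximable S (\<lambda>z. c * g z)"
  unfolding poly_approximable_def
proof (intro allI impI)
  fix e :: real assume "e > 0"
  then obtain p where p: "\<forall>z\<in>S. cmod (g z - poly p z) < e / (cmod c + 1)"
    using assms unfolding poly_approximable_def
    by (metis add_nonneg_pos divide_pos_pos norm_ge_zero zero_less_one)
  have "cmod (c * g z - poly (smult c p) z) < e" if "z \<in> S" for z
  proof -
    have "cmod (c * g z - poly (smult c p) z) = cmod c * cmod (g z - poly p z)"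
      by (simp add: norm_mult[symmetric] algebra_simps)
    also have "\<dots> \<le> (cmod c + 1) * cmod (g z - poly p z)"
      by (simp add: mult_right_mono)
    also have "\<dots> < e"
      using p that by (simp add: add_nonneg_pos pos_less_divide_eq mult.commute)
    finally show ?thesis .
  qed
  then show "\<exists>p. \<forall>z\<in>S. cmod (c * g z - poly p z) < e" by blast
qed

lemma poly_approximable_diff:
  "poly_approximable S g \<Longrightarrow> poly_approximable S h \<Longrightarrow> poly_approximable S (\<lambda>z. g z - h z)"
  using poly_approximable_add[of S g "\<lambda>z. (-1) * h z"] poly_approximable_cmult[of S h "-1"] by simp

lemma poly_approximable_bounded:
  assumes "compact S" "poly_approximable S g"
  shows "\<exists>M. \<forall>z\<in>S. cmod (g z) \<le> M"
proof -
  obtain p where p: "\<forall>z\<in>S. cmod (g z - poly p z) < 1"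
    using assms(2) unfolding poly_approximable_def by (meson zero_less_one)
  have "compact (poly p ` S)"
    by (intro compact_continuous_image assms(1)) (auto intro: continuous_intros)
  then obtain B where "\<forall>z\<in>S. cmod (poly p z) \<le> B"
    using compact_imp_bounded[of "poly p ` S"] by (auto simp: bounded_iff)
  with p have "\<forall>z\<in>S. cmod (g z) \<le> B + 1"
    by (metis add_mono diff_add_cancel norm_triangle_le less_imp_le add.commute)
  then show ?thesis ..
qed

lemma poly_approximable_mult:
  assumes S: "compact S" and g: "poly_approximable S g" and h: "poly_approximable S h"
  shows "poly_approximable S (\<lambda>z. g z * h z)"
  unfolding poly_approximable_def
proof (intro allI impI)
  fix e :: real assume "e > 0"
  obtain M1 M2 where M: "\<forall>z\<in>S. cmod (g z) \<le> M1" "\<forall>z\<in>S. cmod (h z) \<le> M2"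
    using poly_approximable_bounded[OF S g] poly_approximable_bounded[OF S h] by blast
  define M where "M = \<bar>M1\<bar> + \<bar>M2\<bar> + 2"
  define d where "d = min 1 (e / M)"
  have "M > 0" by (simp add: M_def add_nonneg_pos)
  have "d \<le> e / M" by (simp add: d_def)
  with \<open>M > 0\<close> \<open>e > 0\<close> have d: "0 < d" "d \<le> 1" "d * M \<le> e"
    by (simp_all add: pos_le_divide_eq) (simp_all add: d_def)
  obtain p q where p: "\<forall>z\<in>S. cmod (g z - poly p z) < d" and q: "\<forall>z\<in>S. cmod (h z - poly q z) < d"
    using g h d(1) unfolding poly_approximable_def by blast
  have "cmod (g z * h z - poly (p * q) z) < e" if z: "z \<in> S" for z
  proof -
    have "cmod (poly q z) \<le> cmod (h z) + cmod (h z - poly q z)"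
      using norm_triangle_sub[of "poly q z" "h z"] by (simp add: norm_minus_commute)
    then have q_bound: "cmod (poly q z) \<le> \<bar>M2\<bar> + 1"
      using M(2) q z d(2) by fastforce
    have g_bound: "cmod (g z) \<le> \<bar>M1\<bar>"
      using M(1) z by fastforce
    have "g z * h z - poly (p * q) z = g z * (h z - poly q z) + (g z - poly p z) * poly q z"
      by (simp add: algebra_simps)
    then have "cmod (g z * h z - poly (p * q) z)
        \<le> cmod (g z) * cmod (h z - poly q z) + cmod (g z - poly p z) * cmod (poly q z)"
      by (metis norm_mult norm_triangle_ineq)
    also have "\<dots> \<le> \<bar>M1\<bar> * d + d * (\<bar>M2\<bar> + 1)"
      using p q z d(1) by (intro add_mono mult_mono g_bound q_bound) (auto simp: less_imp_le)
    also have "\<dots> < d * M" using d by (simp add: M_def algebra_simps)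
    finally show ?thesis using d(3) by linarith
  qed
  then show "\<exists>p. \<forall>z\<in>S. cmod (g z * h z - poly p z) < e" by blast
qed

lemma poly_approximable_power:
  "compact S \<Longrightarrow> poly_approximable S g \<Longrightarrow> poly_approximable S (\<lambda>z. g z ^ n)"
  by (induction n) (auto intro: poly_approximable_const poly_approximable_mult)

lemma poly_approximable_sum:
  "finite A \<Longrightarrow> (\<And>i. i \<in> A \<Longrightarrow> poly_approximable S (g i)) \<Longrightarrow>
    poly_approximable S (\<lambda>z. \<Sum>i\<in>A. g i z)"
  by (induction A rule: finite_induct) (auto intro: poly_approximable_const poly_approximable_add)

lemma poly_approximable_prod:
  "finite A \<Longrightarrow> compact S \<Longrightarrow> (\<And>i. i \<in> A \<Longrightarrow> poly_approximable S (g i)) \<Longrightarrow>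
    poly_approximable S (\<lambda>z. \<Prod>i\<in>A. g i z)"
  by (induction A rule: finite_induct) (auto intro: poly_approximable_const poly_approximable_mult)

lemma poly_approximable_geometric:
  assumes S: "compact S" and h: "poly_approximable S h"
    and q: "q < 1" and h_le: "\<And>z. z \<in> S \<Longrightarrow> cmod (h z) \<le> q"
  shows "poly_approximable S (\<lambda>z. 1 / (1 - h z))"
proof (rule poly_approximable_uniform_closure)
  fix e :: real assume "e > 0"
  show "\<exists>g. poly_approximable S g \<and> (\<forall>z\<in>S. cmod (1 / (1 - h z) - g z) \<le> e)"
  proof (cases "S = {}")
    case False
    then have "0 \<le> q" using h_le norm_ge_zero order_trans by blast
    with q \<open>e > 0\<close> obtain N where N: "q ^ N < e * (1 - q)"
      using real_arch_pow_inv[of "e * (1 - q)" q] by auto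
    have "cmod (1 / (1 - h z) - (\<Sum>n<N. h z ^ n)) \<le> e" if z: "z \<in> S" for z
    proof -
      have hz: "cmod (h z) \<le> q" using h_le z .
      with q have h1: "h z \<noteq> 1" by auto
      have "1 / (1 - h z) - (\<Sum>n<N. h z ^ n) = h z ^ N / (1 - h z)"
        using h1 by (simp add: sum_gp_strict field_simps)
      also have "cmod \<dots> \<le> q ^ N / (1 - q)"
      proof -
        have "1 - q \<le> cmod (1 - h z)"
          using hz norm_triangle_ineq2[of 1 "h z"] by simp
        then show ?thesis
          using hz q \<open>0 \<le> q\<close> by (simp add: norm_divide norm_power frac_le power_mono)
      qed
      also have "\<dots> \<le> e" using N q by (simp add: divide_le_eq)
      finally show ?thesis .
    qed
    moreover have "poly_approximable S (\<lambda>z. \<Sum>n<N. h z ^ n)"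
      by (intro poly_approximable_sum poly_approximable_power S h) auto
    ultimately show ?thesis by blast
  qed (auto intro: poly_approximable_const)
qed

lemma poly_approximable_pole_far:
  assumes S: "compact S" and M: "\<And>z. z \<in> S \<Longrightarrow> cmod z \<le> M" and a: "M < cmod a" "0 \<le> M"
  shows "poly_approximable S (\<lambda>z. 1 / (z - a))"
proof -
  have "a \<noteq> 0" using a by auto
  have "poly_approximable S (\<lambda>z. (- 1 / a) * (1 / (1 - z / a)))"
  proof (intro poly_approximable_cmult poly_approximable_geometric S)
    show "poly_approximable S (\<lambda>z. z / a)"
      using poly_approximable_cmult[OF poly_approximable_ident, of S "1 / a"] by simp
    show "cmod (z / a) \<le> M / cmod a" if "z \<in> S" for z
      using M[OF that] by (simp add: norm_divide divide_right_mono)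
    show "M / cmod a < 1" using a by (simp add: divide_less_eq)
  qed
  then show ?thesis
  proof (rule poly_approximable_cong)
    fix z assume "z \<in> S"
    with M a have "z \<noteq> a" by force
    with \<open>a \<noteq> 0\<close> show "- 1 / a * (1 / (1 - z / a)) = 1 / (z - a)"
      by (simp add: field_simps)
  qed
qed

text \<open>\<open>1 / (z - b)\<close> is a geometric series in \<open>(b - a) / (z - a)\<close> times \<open>1 / (z - a)\<close>.\<close>
lemma poly_approximable_pole_shift:
  assumes S: "compact S" and a: "poly_approximable S (\<lambda>z. 1 / (z - a))"
    and ab: "dist a b < infdist a S"
  shows "poly_approximable S (\<lambda>z. 1 / (z - b))"
proof -
  define d where "d = infdist a S"
  have d_le: "d \<le> cmod (z - a)" if "z \<in> S" for z
    using infdist_le[OF that, of a] by (simp add: d_def dist_norm norm_minus_commute)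
  have "dist a b < d" using ab by (simp add: d_def)
  then have "d > 0" using zero_le_dist[of a b] by linarith
  have bound: "cmod ((b - a) * (1 / (z - a))) \<le> dist a b / d" if "z \<in> S" for z
  proof -
    have "cmod ((b - a) * (1 / (z - a))) = dist a b / cmod (z - a)"
      by (simp add: norm_divide dist_norm norm_minus_commute)
    also have "\<dots> \<le> dist a b / d"
      using d_le[OF that] \<open>d > 0\<close> by (intro divide_left_mono mult_pos_pos) auto
    finally show ?thesis .
  qed
  have "dist a b / d < 1" using \<open>dist a b < d\<close> \<open>d > 0\<close> by simp
  with bound have "poly_approximable S (\<lambda>z. 1 / (1 - (b - a) * (1 / (z - a))))"
    by (intro poly_approximable_geometric[OF S poly_approximable_cmult[OF a]])
  then have "poly_approximable S (\<lambda>z. 1 / (z - a) * (1 / (1 - (b - a) * (1 / (z - a)))))"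
    by (rule poly_approximable_mult[OF S a])
  then show ?thesis
  proof (rule poly_approximable_cong)
    fix z assume "z \<in> S"
    then have "dist a b < cmod (z - a)" using d_le \<open>dist a b < d\<close> by fastforce
    then have "z \<noteq> a" "z \<noteq> b" by (auto simp: dist_norm norm_minus_commute)
    then show "1 / (z - a) * (1 / (1 - (b - a) * (1 / (z - a)))) = 1 / (z - b)"
      by (simp add: field_simps)
  qed
qed

lemma poly_approximable_pole_connected:
  assumes S: "compact S" and C: "connected C" "C \<inter> S = {}"
    and a0: "a0 \<in> C" "poly_approximable S (\<lambda>z. 1 / (z - a0))" and a: "a \<in> C"
  shows "poly_approximable S (\<lambda>z. 1 / (z - a))"
proof (cases "S = {}")
  case False
  show ?thesis
    using C(1) a0(1) a a0(2)
  proof (rule connected_induction_simple)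
    fix c assume "c \<in> C"
    define d where "d = infdist c S / 3"
    have "d > 0"
      using infdist_pos_not_in_closed[OF compact_imp_closed[OF S] False] \<open>c \<in> C\<close> C(2)
      by (auto simp: d_def)
    have "dist x y < infdist x S" if "x \<in> ball c d" "y \<in> ball c d" for x y
    proof -
      have "infdist c S \<le> infdist x S + dist c x" by (rule infdist_triangle)
      moreover have "dist x y \<le> dist c x + dist c y" by (rule dist_triangle3)
      ultimately show ?thesis using that by (simp add: d_def)
    qed
    then have "\<forall>x\<in>C \<inter> ball c d. \<forall>y\<in>C \<inter> ball c d.
        poly_approximable S (\<lambda>z. 1 / (z - x)) \<longrightarrow> poly_approximable S (\<lambda>z. 1 / (z - y))"
      using poly_approximable_pole_shift[OF S] by blast
    moreover have "openin (top_of_set C) (C \<inter> ball c d)" by (simp add: openin_open_Int)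
    ultimately show "\<exists>T. openin (top_of_set C) T \<and> c \<in> T \<and> (\<forall>x\<in>T. \<forall>y\<in>T.
        poly_approximable S (\<lambda>z. 1 / (z - x)) \<longrightarrow> poly_approximable S (\<lambda>z. 1 / (z - y)))"
      using \<open>c \<in> C\<close> \<open>d > 0\<close> by (intro exI[of _ "C \<inter> ball c d"]) auto
  qed
qed (simp add: poly_approximable_def)

lemma poly_approximable_real_polynomial_function:
  assumes K: "compact K" and re: "poly_approximable K (\<lambda>z. of_real (Re z))"
    and im: "poly_approximable K (\<lambda>z. of_real (Im z))"
    and u: "real_polynomial_function u"
  shows "poly_approximable K (\<lambda>z. of_real (u z))"
  using u
proof (induction rule: real_polynomial_function.induct)
  case (linear f)
  have f: "f z = Re z * f 1 + Im z * f \<i>" for z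
  proof -
    have "Re z *\<^sub>R 1 + Im z *\<^sub>R \<i> = z" by (simp add: complex_eq_iff)
    then have "f z = f (Re z *\<^sub>R 1 + Im z *\<^sub>R \<i>)" by simp
    then show ?thesis
      using bounded_linear.linear[OF linear] by (simp add: linear_add linear_scale)
  qed
  have "poly_approximable K
      (\<lambda>z. of_real (f 1) * of_real (Re z) + of_real (f \<i>) * of_real (Im z))"
    by (intro poly_approximable_add poly_approximable_cmult re im)
  then show ?case
  proof (rule poly_approximable_cong)
    fix z
    show "of_real (f 1) * of_real (Re z) + of_real (f \<i>) * of_real (Im z) = complex_of_real (f z)"
      using f[of z] by (simp add: algebra_simps)
  qed
next
  case (const c)
  show ?case by (rule poly_approximable_const)
next
  case (add f g)
  then show ?case using poly_approximable_add[OF add.IH] by simp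
next
  case (mult f g)
  then show ?case using poly_approximable_mult[OF K mult.IH] by simp
qed

text \<open>The pole of \<open>1 / z\<close> can be pushed to infinity along a radius avoiding \<open>K\<close>, and
  \<open>1 / z = cnj z\<close> on the circle.\<close>
lemma poly_approximable_cnj_proper_subset_circle:
  assumes K: "compact K" "K \<subseteq> sphere 0 1" "K \<noteq> sphere 0 1"
  shows "poly_approximable K cnj"
proof -
  obtain b where b: "b \<in> sphere 0 1" "b \<notin> K" using K by blast
  define C where "C = (\<lambda>t. complex_of_real t * b) ` {0..2}"
  have "connected C" unfolding C_def
    by (intro connected_continuous_image connected_Icc continuous_intros)
  moreover have "C \<inter> K = {}"
  proof -
    have "complex_of_real t * b \<notin> K" if "t \<in> {0..2}" for t
    proof
      assume tb: "complex_of_real t * b \<in> K"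
      then have "cmod (complex_of_real t * b) = 1" using K(2) by auto
      with that b(1) have "t = 1" by (simp add: norm_mult)
      with tb b(2) show False by simp
    qed
    then show ?thesis by (auto simp: C_def)
  qed
  moreover have "2 * b \<in> C" unfolding C_def by (rule image_eqI[of _ _ 2]) auto
  moreover have "poly_approximable K (\<lambda>z. 1 / (z - 2 * b))"
    using K(2) b(1) by (intro poly_approximable_pole_far[OF K(1), of 1]) (auto simp: norm_mult)
  moreover have "0 \<in> C" unfolding C_def by (rule image_eqI[of _ _ 0]) auto
  ultimately have "poly_approximable K (\<lambda>z. 1 / (z - 0))"
    by (rule poly_approximable_pole_connected[OF K(1)])
  then show ?thesis
  proof (rule poly_approximable_cong)
    fix z assume "z \<in> K"
    then have "z * cnj z = 1" using K(2) complex_norm_square[of z] by auto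
    then show "1 / (z - 0) = cnj z" by (simp add: divide_eq_eq mult.commute)
  qed
qed

lemma poly_approximable_if_Re_Im:
  assumes K: "compact K" and re: "poly_approximable K (\<lambda>z. of_real (Re z))"
    and im: "poly_approximable K (\<lambda>z. of_real (Im z))" and \<phi>: "continuous_on K \<phi>"
  shows "poly_approximable K \<phi>"
proof (rule poly_approximable_uniform_closure)
  fix e :: real assume "e > 0"
  obtain u1 where u1: "real_polynomial_function u1" "\<And>z. z \<in> K \<Longrightarrow> \<bar>Re (\<phi> z) - u1 z\<bar> < e / 2"
    using Stone_Weierstrass_real_polynomial_function[OF K, of "\<lambda>z. Re (\<phi> z)" "e/2"] \<open>e > 0\<close> \<phi>
    by (auto intro: continuous_intros)
  obtain u2 where u2: "real_polynomial_function u2" "\<And>z. z \<in> K \<Longrightarrow> \<bar>Im (\<phi> z) - u2 z\<bar> < e / 2"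
    using Stone_Weierstrass_real_polynomial_function[OF K, of "\<lambda>z. Im (\<phi> z)" "e/2"] \<open>e > 0\<close> \<phi>
    by (auto intro: continuous_intros)
  define h where "h z = of_real (u1 z) + \<i> * of_real (u2 z)" for z
  have "poly_approximable K h"
    unfolding h_def
    by (rule poly_approximable_add[OF
          poly_approximable_real_polynomial_function[OF K re im u1(1)]
          poly_approximable_cmult[OF
            poly_approximable_real_polynomial_function[OF K re im u2(1)]]])
  moreover have "cmod (\<phi> z - h z) \<le> e" if z: "z \<in> K" for z
  proof -
    have "cmod (\<phi> z - h z) \<le> \<bar>Re (\<phi> z - h z)\<bar> + \<bar>Im (\<phi> z - h z)\<bar>" by (rule cmod_le)
    also have "\<dots> \<le> e" using u1(2)[OF z] u2(2)[OF z] by (simp add: h_def)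
    finally show ?thesis .
  qed
  ultimately show "\<exists>h. poly_approximable K h \<and> (\<forall>z\<in>K. cmod (\<phi> z - h z) \<le> e)" by blast
qed

lemma poly_approximable_proper_subset_circle:
  assumes K: "compact K" "K \<subseteq> sphere 0 1" "K \<noteq> sphere 0 1" and \<phi>: "continuous_on K \<phi>"
  shows "poly_approximable K \<phi>"
proof (rule poly_approximable_if_Re_Im[OF K(1) _ _ \<phi>])
  note cnj = poly_approximable_cnj_proper_subset_circle[OF K]
  show "poly_approximable K (\<lambda>z. of_real (Re z))"
    by (rule poly_approximable_cong[OF poly_approximable_cmult[OF
          poly_approximable_add[OF poly_approximable_ident cnj], of "1/2"]])
      (simp add: complex_add_cnj)
  show "poly_approximable K (\<lambda>z. of_real (Im z))"
    by (rule poly_approximable_cong[OF poly_approximable_cmult[OF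
          poly_approximable_diff[OF poly_approximable_ident cnj], of "- \<i> / 2"]])
      (simp add: complex_diff_cnj complex_eq_iff)
qed

lemma poly_approximable_inverse_poly:
  assumes S: "compact S" and roots: "\<And>a. poly p a = 0 \<Longrightarrow> poly_approximable S (\<lambda>z. 1 / (z - a))"
  shows "poly_approximable S (\<lambda>z. 1 / poly p z)"
proof -
  obtain root where root: "smult (lead_coeff p) (\<Prod>i<degree p. [:- root i, 1:]) = p"
    by (rule complex_poly_decompose')
  have p_eq: "poly p w = lead_coeff p * (\<Prod>i<degree p. w - root i)" for w
    using arg_cong[OF root, of "\<lambda>q. poly q w"] by (simp add: poly_prod)
  have "poly p (root i) = 0" if "i < degree p" for i
    using that by (auto simp: p_eq prod_zero_iff)
  then have "poly_approximable S (\<lambda>w. (1 / lead_coeff p) * (\<Prod>i<degree p. 1 / (w - root i)))"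
    by (intro poly_approximable_cmult poly_approximable_prod S finite_lessThan roots) auto
  then show ?thesis
    by (rule poly_approximable_cong) (simp add: p_eq prod_dividef)
qed

lemma norm_divide_one_minus_le:
  fixes u :: complex
  assumes "cmod u \<le> 1/2"
  shows "cmod (u / (1 - u)) \<le> 2 * cmod u"
proof -
  have "1/2 \<le> cmod (1 - u)" using assms norm_triangle_ineq2[of 1 u] by simp
  then have "cmod u / cmod (1 - u) \<le> cmod u / (1/2)"
    by (intro divide_left_mono) auto
  then show ?thesis by (simp add: norm_divide)
qed

lemma poly_approximable_pole_between:
  assumes R: "0 \<le> R" "R < s" "s < \<rho>" "\<rho> \<le> 1"
    and K: "compact K" "K \<subseteq> sphere 0 1" "K \<noteq> sphere 0 1" and a: "cmod a = s"
  shows "poly_approximable (cball 0 R \<union> (\<lambda>\<zeta>. of_real \<rho> * \<zeta>) ` K) (\<lambda>z. 1 / (z - a))"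
proof -
  obtain b where b: "b \<in> sphere 0 1" "b \<notin> K" using K by blast
  define S where "S = cball 0 R \<union> (\<lambda>\<zeta>. of_real \<rho> * \<zeta>) ` K"
  have S: "compact S" unfolding S_def
    by (intro compact_Un compact_cball compact_continuous_image K continuous_intros)
  have S1: "cmod z \<le> 1" if "z \<in> S" for z
    using that R K(2) unfolding S_def by (auto simp: norm_mult)
  define C where "C = (\<lambda>t. complex_of_real t * b) ` {s..2} \<union> sphere 0 s"
  have "connected C"
    unfolding C_def using R b(1)
    by (intro connected_Un connected_continuous_image connected_Icc continuous_intros connected_sphere)
      (auto intro!: image_eqI[of _ _ s] simp: norm_mult)
  moreover have "C \<inter> S = {}"
  proof -
    have "cmod z = s \<or> (cmod z \<ge> s \<and> (cmod z = \<rho> \<longrightarrow> z = of_real \<rho> * b))" if "z \<in> C" for z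
      using that b(1) R by (auto simp: C_def norm_mult)
    moreover have "cmod z \<le> R \<or> (cmod z = \<rho> \<and> z \<noteq> of_real \<rho> * b)" if "z \<in> S" for z
      using that b(2) K(2) R by (auto simp: S_def norm_mult)
    ultimately show ?thesis using R by fastforce
  qed
  moreover have "2 * b \<in> C" unfolding C_def using R by (intro UnI1 image_eqI[of _ _ 2]) auto
  moreover have "poly_approximable S (\<lambda>z. 1 / (z - 2 * b))"
    using b(1) by (intro poly_approximable_pole_far[OF S S1]) (auto simp: norm_mult)
  moreover have "a \<in> C" using a by (simp add: C_def)
  ultimately show ?thesis
    unfolding S_def[symmetric] by (rule poly_approximable_pole_connected[OF S])
qed

lemma norm_power_divide_power_diff_le:
  fixes z :: complex
  assumes "s > 0" "(cmod z / s) ^ N \<le> 1/2"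
  shows "cmod (z ^ N / (z ^ N - of_real s ^ N)) \<le> 2 * (cmod z / s) ^ N"
proof -
  define u where "u = (z / of_real s) ^ N"
  have "cmod u = (cmod z / s) ^ N" using assms(1) by (simp add: u_def norm_divide norm_power)
  with assms(2) have "u \<noteq> 1" by auto
  then have "z ^ N / (z ^ N - of_real s ^ N) = - (u / (1 - u))"
    using assms(1) by (simp add: u_def power_divide field_simps)
  with norm_divide_one_minus_le[of u] \<open>cmod u = _\<close> assms(2) show ?thesis by simp
qed

lemma norm_power_divide_power_diff_minus_one_le:
  fixes z :: complex
  assumes "s > 0" "z \<noteq> 0" "(s / cmod z) ^ N \<le> 1/2"
  shows "cmod (z ^ N / (z ^ N - of_real s ^ N) - 1) \<le> 2 * (s / cmod z) ^ N"
proof -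
  define u where "u = (of_real s / z) ^ N"
  have "cmod u = (s / cmod z) ^ N" using assms(1) by (simp add: u_def norm_divide norm_power)
  with assms(3) have "u \<noteq> 1" by auto
  with assms(1,2) have "z ^ N / (z ^ N - of_real s ^ N) - 1 = u / (1 - u)"
    by (simp add: u_def power_divide field_simps)
  with norm_divide_one_minus_le[of u] \<open>cmod u = _\<close> assms(3) show ?thesis by simp
qed

lemma poly_approximable_power_ratio:
  assumes R: "0 \<le> R" "R < s" "s < \<rho>" "\<rho> \<le> 1"
    and K: "compact K" "K \<subseteq> sphere 0 1" "K \<noteq> sphere 0 1" and "N > 0"
  shows "poly_approximable (cball 0 R \<union> (\<lambda>\<zeta>. of_real \<rho> * \<zeta>) ` K)
    (\<lambda>z. z ^ N / (z ^ N - of_real s ^ N))"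
proof -
  define S where "S = cball 0 R \<union> (\<lambda>\<zeta>. of_real \<rho> * \<zeta>) ` K"
  have "compact S" unfolding S_def
    by (intro compact_Un compact_cball compact_continuous_image K continuous_intros)
  have "poly_approximable S (\<lambda>z. 1 / poly (monom 1 N - [:of_real s ^ N:]) z)"
  proof (rule poly_approximable_inverse_poly[OF \<open>compact S\<close>])
    fix a :: complex assume "poly (monom 1 N - [:of_real s ^ N:]) a = 0"
    then have "a ^ N = of_real s ^ N" by (simp add: poly_monom)
    then have "cmod (a ^ N) = cmod (complex_of_real s ^ N)" by (simp only:)
    then have "cmod a ^ N = s ^ N" using R by (simp add: norm_power)
    then have "cmod a = s" using power_eq_imp_eq_base[of "cmod a" N s] R \<open>N > 0\<close> by simp
    then show "poly_approximable S (\<lambda>z. 1 / (z - a))"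
      unfolding S_def by (rule poly_approximable_pole_between[OF R K])
  qed
  then have "poly_approximable S (\<lambda>z. z ^ N * (1 / poly (monom 1 N - [:of_real s ^ N:]) z))"
    by (intro poly_approximable_mult poly_approximable_power poly_approximable_ident \<open>compact S\<close>)
  then show ?thesis
    unfolding S_def[symmetric] by (rule poly_approximable_cong) (simp add: poly_monom)
qed

text \<open>The polynomial approximates \<open>z ^ N / (z ^ N - s ^ N)\<close> for \<open>R < s < \<rho>\<close> and large \<open>N\<close>.\<close>
lemma exists_poly_small_on_disc_near_one_on_scaled:
  assumes R: "0 \<le> R" "R < \<rho>" "\<rho> \<le> 1"
    and K: "compact K" "K \<subseteq> sphere 0 1" "K \<noteq> sphere 0 1" and \<eta>: "\<eta> > 0"
  shows "\<exists>U. (\<forall>z\<in>cball 0 R. cmod (poly U z) \<le> \<eta>) \<and>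
    (\<forall>\<zeta>\<in>K. cmod (poly U (of_real \<rho> * \<zeta>) - 1) \<le> \<eta>)"
proof -
  define s where "s = (R + \<rho>) / 2"
  have s: "R < s" "s < \<rho>" "0 < s" using R by (auto simp: s_def)
  define S where "S = cball 0 R \<union> (\<lambda>\<zeta>. of_real \<rho> * \<zeta>) ` K"
  define q where "q = max (R / s) (s / \<rho>)"
  have q: "0 \<le> q" "q < 1" using R s by (auto simp: q_def divide_less_eq le_max_iff_disj)
  obtain N0 where "q ^ N0 < min (1/2) (\<eta>/4)"
    using real_arch_pow_inv[of "min (1/2) (\<eta>/4)" q] q \<eta> by auto
  moreover define N where "N = Suc N0"
  ultimately have qN: "q ^ N \<le> min (1/2) (\<eta>/4)"
    using power_decreasing[of N0 N q] q by (simp add: N_def)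
  define g :: "complex \<Rightarrow> complex" where "g z = z ^ N / (z ^ N - of_real s ^ N)" for z
  have "poly_approximable S g"
    unfolding S_def g_def using R s K by (intro poly_approximable_power_ratio) (auto simp: N_def)
  with \<eta> obtain U where U: "\<forall>z\<in>S. cmod (g z - poly U z) < \<eta> / 2"
    unfolding poly_approximable_def by (meson half_gt_zero)
  have near: "cmod (poly U z - w) \<le> \<eta>" if "z \<in> S" "cmod (g z - w) \<le> \<eta> / 2" for z w
  proof -
    have "cmod (poly U z - w) \<le> cmod (poly U z - g z) + cmod (g z - w)"
      by (rule norm_diff_triangle_le) auto
    with U that show ?thesis by (fastforce simp: norm_minus_commute)
  qed
  show ?thesis
  proof (intro exI[of _ U] conjI ballI)
    fix z :: complex assume z: "z \<in> cball 0 R"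
    have "(cmod z / s) ^ N \<le> q ^ N"
      using z s q by (intro power_mono) (auto simp: q_def divide_right_mono le_max_iff_disj)
    with qN s(3) have "cmod (g z - 0) \<le> \<eta> / 2"
      using norm_power_divide_power_diff_le[of s z N] by (simp add: g_def)
    with z show "cmod (poly U z) \<le> \<eta>" using near[of z 0] by (simp add: S_def)
  next
    fix \<zeta> assume \<zeta>: "\<zeta> \<in> K"
    then have \<rho>\<zeta>: "cmod (of_real \<rho> * \<zeta>) = \<rho>" using K(2) R by (auto simp: norm_mult)
    then have "(s / cmod (of_real \<rho> * \<zeta>)) ^ N \<le> q ^ N"
      using s q by (intro power_mono) (auto simp: q_def)
    moreover have "of_real \<rho> * \<zeta> \<noteq> 0" using \<rho>\<zeta> s by auto
    ultimately have "cmod (g (of_real \<rho> * \<zeta>) - 1) \<le> \<eta> / 2"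
      using norm_power_divide_power_diff_minus_one_le[of s "of_real \<rho> * \<zeta>" N] qN s(3)
      by (simp add: g_def)
    moreover have "of_real \<rho> * \<zeta> \<in> S" unfolding S_def using \<zeta> by blast
    ultimately show "cmod (poly U (of_real \<rho> * \<zeta>) - 1) \<le> \<eta>" using near by blast
  qed
qed

lemma exists_poly_near_on_scaled:
  assumes K: "compact K" "K \<subseteq> sphere 0 1" "K \<noteq> sphere 0 1" and g: "continuous_on K g"
    and "\<rho> > 0" "\<epsilon> > 0"
  shows "\<exists>P. \<forall>\<zeta>\<in>K. cmod (g \<zeta> - poly P (of_real \<rho> * \<zeta>)) < \<epsilon>"
proof -
  obtain P0 where P0: "\<forall>\<zeta>\<in>K. cmod (g \<zeta> - poly P0 \<zeta>) < \<epsilon>"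
    using poly_approximable_proper_subset_circle[OF K g] \<open>\<epsilon> > 0\<close> unfolding poly_approximable_def by blast
  have "poly (pcompose P0 [:0, 1 / of_real \<rho>:]) (of_real \<rho> * \<zeta>) = poly P0 \<zeta>" for \<zeta>
    using \<open>\<rho> > 0\<close> by (simp add: poly_pcompose)
  with P0 show ?thesis by metis
qed

text \<open>Runge's theorem for the union of a disc and a scaled proper compact subset of the circle:
  multiply a polynomial approximation on \<open>\<rho> K\<close> by the peak polynomial.\<close>
lemma exists_poly_small_on_disc_near_on_scaled:
  assumes R: "0 \<le> R" "R < \<rho>" "\<rho> \<le> 1"
    and K: "compact K" "K \<subseteq> sphere 0 1" "K \<noteq> sphere 0 1"
    and g: "continuous_on K g" and \<epsilon>: "\<epsilon> > 0"
  shows "\<exists>H. (\<forall>z\<in>cball 0 R. cmod (poly H z) \<le> \<epsilon>) \<and>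
    (\<forall>\<zeta>\<in>K. cmod (poly H (of_real \<rho> * \<zeta>) - g \<zeta>) \<le> \<epsilon>)"
proof -
  obtain P where P: "\<forall>\<zeta>\<in>K. cmod (g \<zeta> - poly P (of_real \<rho> * \<zeta>)) < \<epsilon> / 2"
    using exists_poly_near_on_scaled[OF K g, of \<rho> "\<epsilon> / 2"] R \<epsilon> by auto
  obtain M0 where "\<forall>z\<in>cball 0 1. cmod (poly P z) \<le> M0"
    using poly_approximable_bounded[OF compact_cball poly_approximable_poly] by blast
  then obtain M where M: "M \<ge> 1" "\<And>z. cmod z \<le> 1 \<Longrightarrow> cmod (poly P z) \<le> M"
    by (metis max.cobounded1 max.coboundedI2 mem_cball_0)
  have "\<epsilon> / (2 * M) > 0" using \<epsilon> M by simp
  then obtain U where U: "\<forall>z\<in>cball 0 R. cmod (poly U z) \<le> \<epsilon> / (2 * M)"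
    "\<forall>\<zeta>\<in>K. cmod (poly U (of_real \<rho> * \<zeta>) - 1) \<le> \<epsilon> / (2 * M)"
    using exists_poly_small_on_disc_near_one_on_scaled[OF R K] by blast
  have M_U: "cmod (poly P z) * cmod w \<le> \<epsilon> / 2" if "cmod z \<le> 1" "cmod w \<le> \<epsilon> / (2 * M)" for z w
  proof -
    have "cmod (poly P z) * cmod w \<le> M * (\<epsilon> / (2 * M))"
      using M that by (intro mult_mono) auto
    then show ?thesis using M by simp
  qed
  show ?thesis
  proof (intro exI[of _ "P * U"] conjI ballI)
    fix z :: complex assume "z \<in> cball 0 R"
    then show "cmod (poly (P * U) z) \<le> \<epsilon>"
      using M_U[of z "poly U z"] U(1) R \<epsilon> by (simp add: norm_mult)
  next
    fix \<zeta> assume \<zeta>: "\<zeta> \<in> K"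
    define z where "z = of_real \<rho> * \<zeta>"
    have "cmod z \<le> 1" using \<zeta> K(2) R by (auto simp: z_def norm_mult)
    have "poly (P * U) z - g \<zeta> = poly P z * (poly U z - 1) + (poly P z - g \<zeta>)"
      by (simp add: algebra_simps)
    then have "cmod (poly (P * U) z - g \<zeta>) \<le> cmod (poly P z) * cmod (poly U z - 1) + cmod (g \<zeta> - poly P z)"
      by (metis norm_minus_commute norm_mult norm_triangle_ineq)
    also have "\<dots> \<le> \<epsilon>"
      using M_U[OF \<open>cmod z \<le> 1\<close>, of "poly U z - 1"] U(2) P \<zeta> by (fastforce simp: z_def)
    finally show "cmod (poly (P * U) (of_real \<rho> * \<zeta>) - g \<zeta>) \<le> \<epsilon>" by (simp add: z_def)
  qed
qed

lemma higher_deriv_poly: "(deriv ^^ n) (poly p) = poly ((pderiv ^^ n) p)"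
proof (induction n)
  case (Suc n)
  have "(deriv ^^ Suc n) (poly p) = deriv (poly ((pderiv ^^ n) p))" by (simp add: Suc)
  also have "\<dots> = poly (pderiv ((pderiv ^^ n) p))"
    by (rule ext, rule DERIV_imp_deriv, rule poly_DERIV)
  finally show ?case by simp
qed simp

lemma norm_coeff_le_Cauchy:
  assumes "R > 0" and B: "\<And>z. cmod z = R \<Longrightarrow> cmod (poly p z) \<le> B"
  shows "cmod (coeff p k) \<le> B / R ^ k"
proof -
  have "cmod ((deriv ^^ k) (poly p) 0) \<le> fact k * B / R ^ k"
    using B \<open>R > 0\<close>
    by (intro Cauchy_inequality) (auto intro: holomorphic_intros continuous_intros)
  moreover have "(deriv ^^ k) (poly p) 0 = fact k * coeff p k"
    by (simp add: higher_deriv_poly poly_0_coeff_0 coeff_higher_pderiv pochhammer_fact)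
  ultimately have "fact k * cmod (coeff p k) \<le> fact k * (B / R ^ k)"
    by (simp add: norm_mult)
  then show ?thesis by (rule mult_left_le_imp_le) simp
qed

section \<open>A dense sequence of approximation targets\<close>

definition circle_target :: "complex set \<Rightarrow> (complex \<Rightarrow> complex) \<Rightarrow> bool" where
  "circle_target K \<phi> \<longleftrightarrow> compact K \<and> K \<subseteq> sphere 0 1 \<and> K \<noteq> sphere 0 1 \<and> continuous_on K \<phi>"

definition complex_of_rat_pair :: "rat \<times> rat \<Rightarrow> complex" where
  "complex_of_rat_pair p = Complex (of_rat (fst p)) (of_rat (snd p))"

lemma exists_rat_between:
  fixes x y :: real
  assumes "x < y"
  obtains u :: rat where "x < of_rat u" "of_rat u < y"
  using Rats_dense_in_real[OF assms] by (metis Rats_cases)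

lemma exists_rat_pair_near:
  assumes "\<delta> > 0"
  shows "\<exists>p. cmod (a - complex_of_rat_pair p) < \<delta>"
proof -
  obtain u :: rat where u: "Re a < of_rat u" "of_rat u < Re a + \<delta> / 2"
    using exists_rat_between[of "Re a" "Re a + \<delta> / 2"] assms by auto
  obtain v :: rat where v: "Im a < of_rat v" "of_rat v < Im a + \<delta> / 2"
    using exists_rat_between[of "Im a" "Im a + \<delta> / 2"] assms by auto
  have "\<bar>Re a - of_rat u\<bar> < \<delta> / 2" "\<bar>Im a - of_rat v\<bar> < \<delta> / 2"
    using u v by linarith+
  moreover have "cmod (a - complex_of_rat_pair (u, v))
      \<le> \<bar>Re a - of_rat u\<bar> + \<bar>Im a - of_rat v\<bar>"
    using cmod_le[of "a - complex_of_rat_pair (u, v)"] by (simp add: complex_of_rat_pair_def)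
  ultimately have "cmod (a - complex_of_rat_pair (u, v)) < \<delta>" by linarith
  then show ?thesis ..
qed

lemma exists_rat_poly_near:
  assumes "\<delta> > 0"
  shows "\<exists>L. \<forall>z\<in>cball 0 1. cmod (poly p z - poly (Poly (map complex_of_rat_pair L)) z) < \<delta>"
  using assms
proof (induction p arbitrary: \<delta> rule: pCons_induct)
  case 0
  then show ?case by (intro exI[of _ "[]"]) simp
next
  case (pCons a p)
  obtain L where L: "\<forall>z\<in>cball 0 1. cmod (poly p z - poly (Poly (map complex_of_rat_pair L)) z) < \<delta> / 2"
    using pCons.IH[of "\<delta> / 2"] pCons.prems by auto
  obtain c where c: "cmod (a - complex_of_rat_pair c) < \<delta> / 2"
    using exists_rat_pair_near[of "\<delta> / 2" a] pCons.prems by auto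
  show ?case
  proof (intro exI[of _ "c # L"] ballI)
    fix z :: complex assume z: "z \<in> cball 0 1"
    define d where "d = poly p z - poly (Poly (map complex_of_rat_pair L)) z"
    have eq: "poly (pCons a p) z - poly (Poly (map complex_of_rat_pair (c # L))) z
        = (a - complex_of_rat_pair c) + z * d"
      by (simp add: d_def algebra_simps)
    have "cmod (z * d) < \<delta> / 2"
    proof -
      have "cmod (z * d) \<le> cmod d" using z by (simp add: norm_mult mult_left_le_one_le)
      also have "\<dots> < \<delta> / 2" using L z by (simp add: d_def)
      finally show ?thesis .
    qed
    then show "cmod (poly (pCons a p) z - poly (Poly (map complex_of_rat_pair (c # L))) z) < \<delta>"
      unfolding eq using norm_add_less[OF c] by fastforce
  qed
qed

text \<open>A target \<open>((c, r), L)\<close> is the unit circle with the open disc \<open>ball c r\<close> removed (or the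
  empty set, should this leave the whole circle) together with the polynomial whose coefficient
  list is \<open>L\<close>, all with Gaussian rational data.\<close>
type_synonym rat_target = "((rat \<times> rat) \<times> rat) \<times> (rat \<times> rat) list"

definition target_set :: "rat_target \<Rightarrow> complex set" where
  "target_set t =
    (let K = sphere 0 1 - ball (complex_of_rat_pair (fst (fst t))) (of_rat (snd (fst t)))
     in if K = sphere 0 1 then {} else K)"

definition target_poly :: "rat_target \<Rightarrow> complex poly" where
  "target_poly t = Poly (map complex_of_rat_pair (snd t))"

lemma circle_target_rat_target: "circle_target (target_set t) (poly (target_poly t))"
proof -
  define K where "K = sphere 0 1 - ball (complex_of_rat_pair (fst (fst t))) (of_rat (snd (fst t)))"
  have "target_set t = (if K = sphere 0 1 then {} else K)"
    by (simp add: target_set_def K_def)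
  moreover have "compact K" unfolding K_def by (intro compact_diff compact_sphere open_ball)
  moreover have "K \<subseteq> sphere 0 1" by (auto simp: K_def)
  moreover have "{} \<noteq> sphere (0::complex) 1" by (metis empty_iff mem_sphere_0 norm_one)
  ultimately show ?thesis
    unfolding circle_target_def by (simp add: continuous_on_poly)
qed

lemma exists_rat_ball_between:
  assumes "d > 0"
  shows "\<exists>c r. b \<in> ball (complex_of_rat_pair c) (of_rat r) \<and>
    ball (complex_of_rat_pair c) (of_rat r) \<subseteq> ball b d"
proof -
  obtain c where c: "dist (complex_of_rat_pair c) b < d / 2"
    using exists_rat_pair_near[of "d / 2" b] assms by (auto simp: dist_norm norm_minus_commute)
  obtain r where r: "dist (complex_of_rat_pair c) b < of_rat r" "of_rat r < d / 2"
    using exists_rat_between[OF c] by blast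
  have "ball (complex_of_rat_pair c) (of_rat r) \<subseteq> ball b d"
  proof
    fix z assume "z \<in> ball (complex_of_rat_pair c) (of_rat r)"
    then have "dist z (complex_of_rat_pair c) < d / 2" using r(2) by (simp add: dist_commute)
    with c show "z \<in> ball b d" using dist_triangle_less_add[of z _ "d/2" b "d/2"] by (simp add: dist_commute)
  qed
  moreover have "b \<in> ball (complex_of_rat_pair c) (of_rat r)" using r(1) by simp
  ultimately show ?thesis by blast
qed

lemma exists_rat_poly_near_on_circle_target:
  assumes "circle_target K \<phi>" "\<epsilon> > 0"
  shows "\<exists>L. \<forall>\<zeta>\<in>K. cmod (poly (Poly (map complex_of_rat_pair L)) \<zeta> - \<phi> \<zeta>) < \<epsilon>"
proof -
  have K: "compact K" "K \<subseteq> sphere 0 1" "K \<noteq> sphere 0 1" and \<phi>: "continuous_on K \<phi>"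
    using assms(1) by (auto simp: circle_target_def)
  obtain P where P: "\<forall>\<zeta>\<in>K. cmod (\<phi> \<zeta> - poly P \<zeta>) < \<epsilon> / 2"
    using poly_approximable_proper_subset_circle[OF K \<phi>] assms(2)
    unfolding poly_approximable_def by (meson half_gt_zero)
  obtain L where L: "\<forall>z\<in>cball 0 1. cmod (poly P z - poly (Poly (map complex_of_rat_pair L)) z) < \<epsilon> / 2"
    using exists_rat_poly_near[of "\<epsilon> / 2" P] assms(2) by auto
  have "cmod (poly (Poly (map complex_of_rat_pair L)) \<zeta> - \<phi> \<zeta>) < \<epsilon>" if "\<zeta> \<in> K" for \<zeta>
  proof -
    have "cmod (poly (Poly (map complex_of_rat_pair L)) \<zeta> - \<phi> \<zeta>)
        \<le> cmod (poly (Poly (map complex_of_rat_pair L)) \<zeta> - poly P \<zeta>) + cmod (poly P \<zeta> - \<phi> \<zeta>)"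
      by (rule norm_diff_triangle_le) auto
    moreover have "\<zeta> \<in> cball 0 1" using that K(2) by auto
    with L have "cmod (poly (Poly (map complex_of_rat_pair L)) \<zeta> - poly P \<zeta>) < \<epsilon> / 2"
      by (simp add: norm_minus_commute)
    moreover have "cmod (poly P \<zeta> - \<phi> \<zeta>) < \<epsilon> / 2"
      using P that by (simp add: norm_minus_commute)
    ultimately show ?thesis by linarith
  qed
  then show ?thesis by blast
qed

lemma rat_target_approximates:
  assumes "circle_target K \<phi>" "\<epsilon> > 0"
  shows "\<exists>t. K \<subseteq> target_set t \<and> (\<forall>\<zeta>\<in>K. cmod (poly (target_poly t) \<zeta> - \<phi> \<zeta>) < \<epsilon>)"
proof -
  have K: "compact K" "K \<subseteq> sphere 0 1" "K \<noteq> sphere 0 1"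
    using assms(1) by (auto simp: circle_target_def)
  obtain b where b: "b \<in> sphere 0 1" "b \<notin> K" using K by blast
  have "open (- K)" using compact_imp_closed[OF K(1)] by (rule open_Compl)
  then obtain d where d: "d > 0" "ball b d \<subseteq> - K"
    using b(2) open_contains_ball by blast
  obtain c r where cr: "b \<in> ball (complex_of_rat_pair c) (of_rat r)"
    "ball (complex_of_rat_pair c) (of_rat r) \<subseteq> ball b d"
    using exists_rat_ball_between[OF d(1)] by blast
  obtain L where L: "\<forall>\<zeta>\<in>K. cmod (poly (Poly (map complex_of_rat_pair L)) \<zeta> - \<phi> \<zeta>) < \<epsilon>"
    using exists_rat_poly_near_on_circle_target[OF assms] by blast
  define t where "t = ((c, r), L)"
  have "sphere 0 1 - ball (complex_of_rat_pair c) (of_rat r) \<noteq> sphere 0 1" using cr(1) b(1) by blast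
  then have "target_set t = sphere 0 1 - ball (complex_of_rat_pair c) (of_rat r)"
    by (simp add: target_set_def t_def)
  then have "K \<subseteq> target_set t" using K(2) cr(2) d(2) by auto
  moreover have "poly (target_poly t) = poly (Poly (map complex_of_rat_pair L))"
    by (simp add: target_poly_def t_def)
  ultimately show ?thesis using L by metis
qed

text \<open>Every target occurs infinitely often in the enumeration \<open>j \<mapsto> from_nat (fst (prod_decode j))\<close>.\<close>
lemma obtain_dense_target_sequence:
  obtains K :: "nat \<Rightarrow> complex set" and q :: "nat \<Rightarrow> complex \<Rightarrow> complex"
  where "\<And>j. circle_target (K j) (q j)"
    and "\<And>K' \<phi> \<epsilon> M. circle_target K' \<phi> \<Longrightarrow> \<epsilon> > 0 \<Longrightarrow>
      \<exists>j\<ge>M. K' \<subseteq> K j \<and> (\<forall>\<zeta>\<in>K'. cmod (q j \<zeta> - \<phi> \<zeta>) < \<epsilon>)"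
proof -
  define T :: "nat \<Rightarrow> rat_target" where "T j = from_nat (fst (prod_decode j))" for j
  have dense: "\<exists>j\<ge>M. K' \<subseteq> target_set (T j) \<and> (\<forall>\<zeta>\<in>K'. cmod (poly (target_poly (T j)) \<zeta> - \<phi> \<zeta>) < \<epsilon>)"
    if "circle_target K' \<phi>" and "\<epsilon> > 0" for K' \<phi> \<epsilon> M
  proof -
    from rat_target_approximates[OF that] obtain t
      where "K' \<subseteq> target_set t" "\<forall>\<zeta>\<in>K'. cmod (poly (target_poly t) \<zeta> - \<phi> \<zeta>) < \<epsilon>"
      by blast
    moreover have "M \<le> prod_encode (to_nat t, M)" "T (prod_encode (to_nat t, M)) = t"
      by (simp_all add: T_def le_prod_encode_2)
    ultimately show ?thesis by metis
  qed
  show thesis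
    by (rule that[of "\<lambda>j. target_set (T j)" "\<lambda>j. poly (target_poly (T j))"])
      (use circle_target_rat_target dense in auto)
qed

section \<open>The construction\<close>

lemma sum_power_half_le: "(\<Sum>i\<in>{Suc j..<m}. (1/2::real) ^ i) \<le> (1/2) ^ j"
proof (cases "Suc j \<le> m")
  case True
  then obtain N where m: "m = Suc j + N" using le_Suc_ex by blast
  have "(\<Sum>i\<in>{Suc j..<Suc j + N}. (1/2::real) ^ i) = (1/2) ^ j * (1 - (1/2) ^ N)"
  proof (induction N)
    case (Suc N)
    have "{Suc j..<Suc j + Suc N} = insert (Suc j + N) {Suc j..<Suc j + N}" by auto
    with Suc show ?case by (simp add: power_add algebra_simps)
  qed simp
  then show ?thesis by (simp add: m)
qed simp

lemma uniform_limit_subseq_if_frequently_close: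
  fixes g :: "nat \<Rightarrow> 'a \<Rightarrow> 'b::metric_space"
  assumes "\<And>\<epsilon> M. \<epsilon> > 0 \<Longrightarrow> \<exists>j\<ge>M. \<forall>x\<in>S. dist (g j x) (\<phi> x) < \<epsilon>"
  shows "\<exists>s. strict_mono s \<and> uniform_limit S (\<lambda>k. g (s k)) \<phi> sequentially"
proof -
  define close where "close k j \<longleftrightarrow> (\<forall>x\<in>S. dist (g j x) (\<phi> x) < 1 / Suc k)" for k j
  have "\<exists>s. \<forall>k. close k (s k) \<and> s k < s (Suc k)"
  proof (rule dependent_nat_choice)
    show "\<exists>j. close 0 j" using assms[of 1 0] by (auto simp: close_def)
    show "\<exists>j'. close (Suc k) j' \<and> j < j'" for j k
      using assms[of "1 / Suc (Suc k)" "Suc j"] by (auto simp: close_def Suc_le_eq)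
  qed
  then obtain s where s: "\<And>k. close k (s k)" "\<And>k. s k < s (Suc k)" by blast
  have "uniform_limit S (\<lambda>k. g (s k)) \<phi> sequentially"
    unfolding uniform_limit_iff
  proof (intro allI impI)
    fix \<epsilon> :: real assume "\<epsilon> > 0"
    then obtain k0 where k0: "1 / Suc k0 < \<epsilon>" using nat_approx_posE by blast
    have "\<forall>x\<in>S. dist (g (s k) x) (\<phi> x) < \<epsilon>" if "k0 \<le> k" for k
    proof -
      have "1 / real (Suc k) \<le> 1 / Suc k0" using that by (simp add: frac_le)
      then show ?thesis using s(1)[of k] k0 by (fastforce simp: close_def)
    qed
    then show "\<forall>\<^sub>F k in sequentially. \<forall>x\<in>S. dist (g (s k) x) (\<phi> x) < \<epsilon>"
      by (auto simp: eventually_sequentially)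
  qed
  moreover have "strict_mono s" using s(2) by (simp add: strict_mono_Suc_iff)
  ultimately show ?thesis by blast
qed

definition bump :: "real \<Rightarrow> complex \<Rightarrow> complex" where
  "bump g c = (if cmod c < g then c + of_real (2 * g) else c)"

lemma norm_bump_ge: "g \<le> cmod (bump g c)"
proof (cases "cmod c < g")
  case True
  then have "2 * g - cmod c \<le> cmod (c + of_real (2 * g))"
    using norm_triangle_ineq2[of "of_real (2 * g)" "- c"] by (simp add: add.commute)
  with True show ?thesis by (simp add: bump_def)
qed (simp add: bump_def)

lemma norm_bump_diff_le: "0 \<le> g \<Longrightarrow> cmod (bump g c - c) \<le> 2 * g"
  by (simp add: bump_def)

definition bumped_partial_sum :: "(nat \<Rightarrow> real) \<Rightarrow> complex poly \<Rightarrow> nat \<Rightarrow> complex \<Rightarrow> complex" where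
  "bumped_partial_sum \<gamma> p m w = (\<Sum>k<m. bump (\<gamma> k) (coeff p k) * w ^ k)"

text \<open>Block \<open>j\<close> brings the series close to the target \<open>q j\<close>
  on \<open>r (n j) K j\<close>, each later block is small on the disc of radius \<open>r (n j)\<close>, and the bumps
  beyond \<open>D j\<close> cost little there.\<close>
locale abel_construction =
  fixes r \<gamma> :: "nat \<Rightarrow> real"
    and K :: "nat \<Rightarrow> complex set" and q :: "nat \<Rightarrow> complex \<Rightarrow> complex"
    and n D :: "nat \<Rightarrow> nat" and H P :: "nat \<Rightarrow> complex poly"
  assumes admissible: "admissible_radii r"
    and gamma_pos: "\<And>k. 0 < \<gamma> k"
    and gamma_summable: "\<And>t. 0 \<le> t \<Longrightarrow> t < 1 \<Longrightarrow> summable (\<lambda>k. \<gamma> k * t ^ k)"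
    and targets: "\<And>j. circle_target (K j) (q j)"
    and targets_dense: "\<And>K' \<phi> \<epsilon> M. circle_target K' \<phi> \<Longrightarrow> \<epsilon> > 0 \<Longrightarrow>
      \<exists>j\<ge>M. K' \<subseteq> K j \<and> (\<forall>\<zeta>\<in>K'. cmod (q j \<zeta> - \<phi> \<zeta>) < \<epsilon>)"
    and n_mono: "strict_mono n"
    and P_0: "P 0 = 0"
    and P_Suc: "P (Suc j) = P j + monom 1 (D j) * H j"
    and D_Suc: "D j + degree (H j) < D (Suc j)"
    and H_small: "cmod z \<le> r (n j) \<Longrightarrow> cmod (poly (H (Suc j)) z) \<le> (1/2) ^ Suc j"
    and H_target: "\<zeta> \<in> K j \<Longrightarrow> w = of_real (r (n j)) * \<zeta> \<Longrightarrow>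
      cmod (bumped_partial_sum \<gamma> (P j) (D j) w + w ^ D j * poly (H j) w - q j \<zeta>) \<le> (1/2) ^ j"
    and bump_tail: "(\<Sum>k\<in>{D j..<m}. 2 * \<gamma> k * r (n j) ^ k) \<le> (1/2) ^ j"
begin

definition b :: "nat \<Rightarrow> complex" where "b k = coeff (P (Suc k)) k"

definition a :: "nat \<Rightarrow> complex" where "a k = bump (\<gamma> k) (b k)"

definition f :: "complex \<Rightarrow> complex" where "f = eval_fps (Abs_fps a)"

lemma r_bounds: "0 \<le> r k" "r k < 1" and r_mono: "incseq r" and r_lim: "r \<longlonglongrightarrow> 1"
  using admissible by (auto simp: admissible_radii_def)

lemma D_mono: "strict_mono D"
  using D_Suc by (intro strict_monoI_Suc) (meson le_add1 order.strict_trans1)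

lemma coeff_P_eq_0: "D j \<le> k \<Longrightarrow> coeff (P j) k = 0"
proof (induction j arbitrary: k)
  case (Suc j)
  then have "coeff (H j) (k - D j) = 0" using D_Suc[of j] by (intro coeff_eq_0) linarith
  with Suc D_Suc[of j] show ?case by (simp add: P_Suc coeff_monom_mult)
qed (simp add: P_0)

lemma coeff_P_stable: "i \<le> j \<Longrightarrow> k < D i \<Longrightarrow> coeff (P j) k = coeff (P i) k"
proof (induction j rule: dec_induct)
  case (step j)
  then have "k < D j" using D_mono by (meson order_less_le_trans strict_mono_less_eq)
  with step show ?case by (simp add: P_Suc coeff_monom_mult)
qed simp

lemma b_eq_coeff_P: "k < D j \<Longrightarrow> b k = coeff (P j) k"
  using coeff_P_stable[of j "max j (Suc k)" k] coeff_P_stable[of "Suc k" "max j (Suc k)" k]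
    strict_mono_imp_increasing[OF D_mono, of "Suc k"]
  by (simp add: b_def)

lemma poly_P_eq_sum: "poly (P j) w = (\<Sum>k<D j. b k * w ^ k)"
proof -
  have "poly (P j) w = (\<Sum>k<D j. coeff (P j) k * w ^ k)"
  proof (cases "P j = 0")
    case False
    then have "degree (P j) < D j" using coeff_P_eq_0 by (intro degree_lessI) auto
    then show ?thesis
      unfolding poly_altdef
      by (intro sum.mono_neutral_left) (auto intro: le_degree)
  qed simp
  then show ?thesis by (simp add: b_eq_coeff_P)
qed

lemma poly_P_split: "j \<le> m \<Longrightarrow> poly (P m) w = poly (P j) w + (\<Sum>i\<in>{j..<m}. w ^ D i * poly (H i) w)"
  by (induction m rule: dec_induct) (simp_all add: P_Suc poly_monom)

lemma b_in_block: "D i \<le> k \<Longrightarrow> k < D (Suc i) \<Longrightarrow> b k = coeff (H i) (k - D i)"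
  using b_eq_coeff_P[of k "Suc i"] coeff_P_eq_0[of i k] by (simp add: P_Suc coeff_monom_mult)

lemma norm_b_le:
  assumes t: "0 < t" "t \<le> 1" "t \<le> r (n m)" and k: "D (Suc m) \<le> k"
  shows "cmod (b k) \<le> (1 / t) ^ k"
proof -
  have "D 0 \<le> D (Suc m)" using D_mono by (simp add: strict_mono_less_eq)
  with k have "\<not> k < D 0" by linarith
  moreover have "k < D (Suc k)" using strict_mono_imp_increasing[OF D_mono, of "Suc k"] by simp
  ultimately obtain i where i: "\<not> k < D i" "k < D (Suc i)"
    using ex_least_nat_less[of "\<lambda>i. k < D i" "Suc k"] by auto
  have "D (Suc m) < D (Suc i)" using k i(2) by linarith
  then have "m < i" using D_mono by (simp add: strict_mono_less)
  then obtain i' where i': "i = Suc i'" "m \<le> i'" by (cases i) auto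
  have "r (n m) \<le> r (n i')"
    using i'(2) n_mono r_mono by (simp add: incseqD strict_mono_less_eq)
  with t(3) have "cmod (poly (H i) z) \<le> (1/2) ^ i" if "cmod z = t" for z
    using H_small[of z i'] that by (simp add: i'(1))
  then have "cmod (coeff (H i) (k - D i)) \<le> (1/2) ^ i / t ^ (k - D i)"
    using t(1) by (rule norm_coeff_le_Cauchy[rotated])
  also have "\<dots> \<le> 1 / t ^ k"
    using t by (intro frac_le power_decreasing) (auto simp: power_le_one)
  finally show ?thesis using b_in_block[of i k] i by (simp add: power_one_over)
qed

lemma summable_norm_b:
  assumes "cmod z < 1"
  shows "summable (\<lambda>k. norm (b k * z ^ k))"
proof -
  define t where "t = (1 + cmod z) / 2"
  have t: "cmod z < t" "t < 1" "0 < t" using assms by (auto simp: t_def add_pos_nonneg)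
  have "\<forall>\<^sub>F k in sequentially. t < r k" using r_lim t(2) by (rule order_tendstoD)
  then obtain m where "t < r m" unfolding eventually_sequentially by blast
  moreover have "r m \<le> r (n m)"
    using strict_mono_imp_increasing[OF n_mono, of m] r_mono by (simp add: incseqD)
  ultimately have tm: "t \<le> r (n m)" by simp
  show ?thesis
  proof (rule summable_comparison_test'[where N = "D (Suc m)"])
    show "summable (\<lambda>k. (cmod z / t) ^ k)"
      using t by (intro summable_geometric) simp
    fix k assume "D (Suc m) \<le> k"
    then have "norm (b k * z ^ k) \<le> (1 / t) ^ k * cmod z ^ k"
      unfolding norm_mult norm_power
      using norm_b_le[OF t(3) _ tm] t by (intro mult_right_mono) auto
    then show "norm (norm (b k * z ^ k)) \<le> (cmod z / t) ^ k" by (simp add: power_divide)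
  qed
qed

lemma summable_norm_a:
  assumes "cmod z < 1"
  shows "summable (\<lambda>k. norm (a k * z ^ k))"
proof -
  have "summable (\<lambda>k. 2 * (\<gamma> k * cmod z ^ k))"
    by (intro summable_mult gamma_summable) (use assms in auto)
  with summable_norm_b[OF assms]
  have "summable (\<lambda>k. norm (b k * z ^ k) + 2 * (\<gamma> k * cmod z ^ k))"
    by (rule summable_add)
  then show ?thesis
  proof (rule summable_comparison_test'[where N = 0])
    fix k
    have "a k * z ^ k = b k * z ^ k + (a k - b k) * z ^ k" by (simp add: algebra_simps)
    then have "norm (a k * z ^ k) \<le> norm (b k * z ^ k) + norm ((a k - b k) * z ^ k)"
      by (metis norm_triangle_ineq)
    also have "norm ((a k - b k) * z ^ k) \<le> 2 * \<gamma> k * cmod z ^ k"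
      unfolding norm_mult norm_power a_def
      using norm_bump_diff_le[of "\<gamma> k" "b k"] gamma_pos[of k] by (intro mult_right_mono) auto
    finally show "norm (norm (a k * z ^ k)) \<le> norm (b k * z ^ k) + 2 * (\<gamma> k * cmod z ^ k)"
      by (simp add: mult.assoc)
  qed
qed

lemma f_sums: "cmod z < 1 \<Longrightarrow> (\<lambda>k. a k * z ^ k) sums f z"
  unfolding f_def eval_fps_def
  by (simp add: summable_sums summable_norm_cancel[OF summable_norm_a])

lemma f_holomorphic: "f holomorphic_on ball 0 1"
proof -
  have "1 \<le> fps_conv_radius (Abs_fps a)"
    unfolding fps_conv_radius_def
    by (rule conv_radius_geI_ex') (auto intro: summable_norm_cancel[OF summable_norm_a])
  then have "ball 0 1 \<subseteq> eball (0::complex) (fps_conv_radius (Abs_fps a))"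
    by (auto simp: eball_def intro: less_le_trans[of _ 1])
  then show ?thesis unfolding f_def by (rule holomorphic_on_eval_fps)
qed

lemma norm_a_ge: "\<gamma> k \<le> cmod (a k)"
  unfolding a_def by (rule norm_bump_ge)

lemma partial_sum_split:
  assumes "j < m"
  shows "(\<Sum>k<D m. a k * w ^ k) = bumped_partial_sum \<gamma> (P j) (D j) w + w ^ D j * poly (H j) w +
    (\<Sum>i\<in>{Suc j..<m}. w ^ D i * poly (H i) w) + (\<Sum>k\<in>{D j..<D m}. (a k - b k) * w ^ k)"
proof -
  define e where "e k = a k - b k" for k
  have "D j \<le> D m" using assms D_mono by (simp add: strict_mono_less_eq)
  have "(\<Sum>k<D m. a k * w ^ k) = poly (P m) w + (\<Sum>k<D m. e k * w ^ k)"
    by (simp add: e_def poly_P_eq_sum ring_distribs flip: sum.distrib)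
  also have "poly (P m) w = poly (P j) w + w ^ D j * poly (H j) w +
      (\<Sum>i\<in>{Suc j..<m}. w ^ D i * poly (H i) w)"
    using assms by (simp add: poly_P_split[of j m] sum.atLeast_Suc_lessThan)
  also have "(\<Sum>k<D m. e k * w ^ k) = (\<Sum>k<D j. e k * w ^ k) + (\<Sum>k\<in>{D j..<D m}. e k * w ^ k)"
    using sum.atLeastLessThan_concat[OF _ \<open>D j \<le> D m\<close>, of 0 "\<lambda>k. e k * w ^ k"]
    by (simp add: atLeast0LessThan)
  also have "poly (P j) w + (\<Sum>k<D j. e k * w ^ k) = bumped_partial_sum \<gamma> (P j) (D j) w"
    by (simp add: bumped_partial_sum_def poly_P_eq_sum e_def a_def b_eq_coeff_P
        ring_distribs flip: sum.distrib)
  ultimately show ?thesis by (simp add: e_def algebra_simps)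
qed

lemma norm_later_blocks_le:
  assumes w: "cmod w \<le> r (n j)"
  shows "cmod (\<Sum>i\<in>{Suc j..<m}. w ^ D i * poly (H i) w) \<le> (1/2) ^ j"
proof -
  have "cmod (w ^ D i * poly (H i) w) \<le> (1/2) ^ i" if i: "i \<in> {Suc j..<m}" for i
  proof -
    obtain i' where i': "i = Suc i'" "j \<le> i'" using i by (cases i) auto
    have "cmod w \<le> r (n i')"
      using w i'(2) n_mono r_mono by (meson incseqD order_trans strict_mono_less_eq)
    then have "cmod (poly (H i) w) \<le> (1/2) ^ i" using H_small by (simp add: i'(1))
    moreover have "cmod (w ^ D i) \<le> 1"
      unfolding norm_power using w r_bounds[of "n j"] by (intro power_le_one) auto
    ultimately have "cmod (w ^ D i) * cmod (poly (H i) w) \<le> 1 * (1/2) ^ i"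
      by (intro mult_mono) auto
    then show ?thesis by (simp add: norm_mult)
  qed
  then have "cmod (\<Sum>i\<in>{Suc j..<m}. w ^ D i * poly (H i) w) \<le> (\<Sum>i\<in>{Suc j..<m}. (1/2) ^ i)"
    by (rule sum_norm_le)
  then show ?thesis using sum_power_half_le[of j m] by linarith
qed

lemma norm_bump_tail_le:
  assumes w: "cmod w = r (n j)"
  shows "cmod (\<Sum>k\<in>{D j..<m}. (a k - b k) * w ^ k) \<le> (1/2) ^ j"
proof -
  have "cmod ((a k - b k) * w ^ k) \<le> 2 * \<gamma> k * r (n j) ^ k" for k
    unfolding norm_mult norm_power w a_def
    using norm_bump_diff_le[of "\<gamma> k" "b k"] gamma_pos[of k] r_bounds
    by (intro mult_right_mono) auto
  then have "cmod (\<Sum>k\<in>{D j..<m}. (a k - b k) * w ^ k) \<le> (\<Sum>k\<in>{D j..<m}. 2 * \<gamma> k * r (n j) ^ k)"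
    by (rule sum_norm_le)
  then show ?thesis using bump_tail[of j m] by linarith
qed

lemma f_near_target:
  assumes \<zeta>: "\<zeta> \<in> K j"
  shows "cmod (f (of_real (r (n j)) * \<zeta>) - q j \<zeta>) \<le> 3 * (1/2) ^ j"
proof -
  define w where "w = complex_of_real (r (n j)) * \<zeta>"
  have "cmod \<zeta> = 1" using targets[of j] \<zeta> by (auto simp: circle_target_def)
  then have w: "cmod w = r (n j)" using r_bounds by (simp add: w_def norm_mult)
  define S where "S = (\<lambda>m. \<Sum>k<D m. a k * w ^ k)"
  have "(\<lambda>m. \<Sum>k<m. a k * w ^ k) \<longlonglongrightarrow> f w"
    using f_sums[of w] w r_bounds by (simp add: sums_def)
  from LIMSEQ_subseq_LIMSEQ[OF this D_mono] have "S \<longlonglongrightarrow> f w"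
    by (simp add: S_def o_def)
  then have lim: "(\<lambda>m. cmod (S m - q j \<zeta>)) \<longlonglongrightarrow> cmod (f w - q j \<zeta>)"
    by (intro tendsto_intros)
  have bound: "cmod (S m - q j \<zeta>) \<le> 3 * (1/2) ^ j" if "Suc j \<le> m" for m
  proof -
    have "cmod (S m - q j \<zeta>) \<le>
        cmod (bumped_partial_sum \<gamma> (P j) (D j) w + w ^ D j * poly (H j) w - q j \<zeta>) +
        cmod (\<Sum>i\<in>{Suc j..<m}. w ^ D i * poly (H i) w) +
        cmod (\<Sum>k\<in>{D j..<D m}. (a k - b k) * w ^ k)"
      unfolding S_def partial_sum_split[OF Suc_le_lessD[OF that]]
      by (rule order_trans[OF _ norm_triangle_mono[OF norm_triangle_ineq order_refl]])
        (simp add: algebra_simps)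
    then show ?thesis
      using H_target[OF \<zeta> w_def] norm_later_blocks_le[of w j m] norm_bump_tail_le[OF w, of "D m"] w
      by linarith
  qed
  from lim have "cmod (f w - q j \<zeta>) \<le> 3 * (1/2) ^ j"
    by (rule Lim_bounded[of _ _ "Suc j"]) (use bound in auto)
  then show ?thesis by (simp add: w_def)
qed

lemma abel_universal_rho_f: "abel_universal_rho r f"
  unfolding abel_universal_rho_def
proof (intro conjI allI impI f_holomorphic)
  fix K' :: "complex set" and \<phi> :: "complex \<Rightarrow> complex"
  assume "compact K' \<and> K' \<subseteq> sphere 0 1 \<and> K' \<noteq> sphere 0 1 \<and> continuous_on K' \<phi>"
  then have K': "circle_target K' \<phi>" by (simp add: circle_target_def)
  have "\<exists>j\<ge>M. \<forall>\<zeta>\<in>K'. dist (f (of_real (r (n j)) * \<zeta>)) (\<phi> \<zeta>) < \<epsilon>" if "\<epsilon> > 0" for \<epsilon> M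
  proof -
    obtain M' where M': "(1/2::real) ^ M' < \<epsilon> / 6"
      using real_arch_pow_inv[of "\<epsilon> / 6" "1/2"] \<open>\<epsilon> > 0\<close> by auto
    obtain j where j: "max M M' \<le> j" "K' \<subseteq> K j" "\<forall>\<zeta>\<in>K'. cmod (q j \<zeta> - \<phi> \<zeta>) < \<epsilon> / 2"
      using targets_dense[OF K', of "\<epsilon> / 2" "max M M'"] \<open>\<epsilon> > 0\<close> by auto
    have "(1/2::real) ^ j \<le> (1/2) ^ M'" using j(1) by (intro power_decreasing) auto
    with M' have "3 * (1/2::real) ^ j < \<epsilon> / 2" by linarith
    then have "dist (f (of_real (r (n j)) * \<zeta>)) (\<phi> \<zeta>) < \<epsilon>" if "\<zeta> \<in> K'" for \<zeta>
      using f_near_target[of \<zeta> j] j(2,3) that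
        norm_diff_triangle_le[of "f (of_real (r (n j)) * \<zeta>)" "q j \<zeta>" _ "\<phi> \<zeta>" "cmod (q j \<zeta> - \<phi> \<zeta>)"]
      by (fastforce simp: dist_norm)
    with j(1) show ?thesis by auto
  qed
  then obtain s where s: "strict_mono s"
    and lim: "uniform_limit K' (\<lambda>k \<zeta>. f (of_real (r (n (s k))) * \<zeta>)) \<phi> sequentially"
    using uniform_limit_subseq_if_frequently_close[of K' "\<lambda>j \<zeta>. f (of_real (r (n j)) * \<zeta>)" \<phi>]
    by blast
  have "strict_mono (n \<circ> s)" using n_mono s by (rule strict_mono_o)
  with lim show "\<exists>N. strict_mono N \<and> uniform_limit K' (\<lambda>k \<zeta>. f (of_real (r (N k)) * \<zeta>)) \<phi> sequentially"
    by (intro exI[of _ "n \<circ> s"]) simp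
qed

end

lemma summable_if_limsup_root_le_1:
  fixes \<gamma> :: "nat \<Rightarrow> real"
  assumes "limsup (\<lambda>k. ereal (root k (\<gamma> k))) \<le> 1" "\<And>k. 0 < \<gamma> k" "0 \<le> t" "t < 1"
  shows "summable (\<lambda>k. \<gamma> k * t ^ k)"
proof (rule summable_in_conv_radius)
  define l where "l = limsup (\<lambda>k. ereal (root k (norm (\<gamma> k))))"
  have "l \<le> 1" using assms(1,2) by (simp add: l_def less_imp_le)
  moreover have "0 \<le> l"
    unfolding l_def by (intro le_Limsup always_eventually) (simp_all add: real_root_ge_zero)
  ultimately have "1 \<le> conv_radius \<gamma>"
    using ereal_inverse_antimono[of l 1] by (simp add: conv_radius_def l_def)
  then show "ereal (norm t) < conv_radius \<gamma>"
    using assms(3,4) by (simp add: less_le_trans[of _ 1])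
qed

lemma exists_larger_radius:
  assumes "admissible_radii r"
  shows "\<exists>n'. n < n' \<and> r n < r n'"
proof -
  have "\<forall>\<^sub>F m in sequentially. r n < r m"
    using assms by (intro order_tendstoD) (auto simp: admissible_radii_def)
  then obtain N where "\<And>m. N \<le> m \<Longrightarrow> r n < r m" unfolding eventually_sequentially by blast
  then show ?thesis by (intro exI[of _ "max N (Suc n)"]) auto
qed

text \<open>Dividing the error by \<open>w ^ D\<close>, where \<open>|w| = \<rho> \<le> 1\<close>, reduces this to Runge's theorem.\<close>
lemma exists_block_near_target:
  assumes R: "0 \<le> R" "R < \<rho>" "\<rho> \<le> 1" and target: "circle_target K q"
    and F: "continuous_on UNIV F" and \<epsilon>: "\<epsilon> > 0"
  shows "\<exists>H. (\<forall>z. cmod z \<le> R \<longrightarrow> cmod (poly H z) \<le> \<epsilon>) \<and>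
    (\<forall>\<zeta>\<in>K. \<forall>w. w = of_real \<rho> * \<zeta> \<longrightarrow> cmod (F w + w ^ D * poly H w - q \<zeta>) \<le> \<epsilon>)"
proof -
  define g where "g \<zeta> = (q \<zeta> - F (of_real \<rho> * \<zeta>)) / (of_real \<rho> * \<zeta>) ^ D" for \<zeta>
  have K: "compact K" "K \<subseteq> sphere 0 1" "K \<noteq> sphere 0 1" "continuous_on K q"
    using target by (auto simp: circle_target_def)
  have "\<rho> > 0" using R by linarith
  have "(of_real \<rho> * \<zeta>) ^ D \<noteq> 0" if "\<zeta> \<in> K" for \<zeta>
    using that K(2) \<open>\<rho> > 0\<close> by auto
  with K(4) have "continuous_on K g"
    unfolding g_def by (intro continuous_intros continuous_on_compose2[OF F]) auto
  from exists_poly_small_on_disc_near_on_scaled[OF R K(1-3) this \<epsilon>]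
  obtain H where H: "\<forall>z\<in>cball 0 R. cmod (poly H z) \<le> \<epsilon>"
    "\<forall>\<zeta>\<in>K. cmod (poly H (of_real \<rho> * \<zeta>) - g \<zeta>) \<le> \<epsilon>"
    by blast
  have "cmod (F w + w ^ D * poly H w - q \<zeta>) \<le> \<epsilon>" if "\<zeta> \<in> K" "w = of_real \<rho> * \<zeta>" for \<zeta> w
  proof -
    have "cmod w = \<rho>" using that K(2) \<open>\<rho> > 0\<close> by (auto simp: norm_mult)
    then have "w \<noteq> 0" "cmod (w ^ D) \<le> 1"
      using \<open>\<rho> > 0\<close> R(3) by (auto simp: norm_power power_le_one)
    then have "F w + w ^ D * poly H w - q \<zeta> = w ^ D * (poly H w - g \<zeta>)"
      using that(2) by (simp add: g_def field_simps)
    then have "cmod (F w + w ^ D * poly H w - q \<zeta>) = cmod (w ^ D) * cmod (poly H w - g \<zeta>)"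
      by (simp add: norm_mult)
    also have "\<dots> \<le> 1 * \<epsilon>"
      using H(2) that \<open>cmod (w ^ D) \<le> 1\<close> by (intro mult_mono) auto
    finally show ?thesis by simp
  qed
  moreover have "\<forall>z. cmod z \<le> R \<longrightarrow> cmod (poly H z) \<le> \<epsilon>" using H(1) by simp
  ultimately show ?thesis by blast
qed

lemma exists_construction_block:
  assumes r: "admissible_radii r"
    and \<gamma>_summable: "\<And>t. 0 \<le> t \<Longrightarrow> t < 1 \<Longrightarrow> summable (\<lambda>k. \<gamma> k * t ^ k)"
    and target: "circle_target K q" and \<epsilon>: "\<epsilon> > 0"
  shows "\<exists>n' D H. n < n' \<and> L \<le> D \<and>
    (\<forall>z. cmod z \<le> r n \<longrightarrow> cmod (poly H z) \<le> \<epsilon>) \<and>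
    (\<forall>\<zeta>\<in>K. \<forall>w. w = of_real (r n') * \<zeta> \<longrightarrow>
       cmod (bumped_partial_sum \<gamma> P D w + w ^ D * poly H w - q \<zeta>) \<le> \<epsilon>) \<and>
    (\<forall>m. (\<Sum>k\<in>{D..<m}. 2 * \<gamma> k * r n' ^ k) \<le> \<epsilon>)"
proof -
  have r_bounds: "0 \<le> r k" "r k < 1" for k using r by (auto simp: admissible_radii_def)
  obtain n' where n': "n < n'" "r n < r n'" using exists_larger_radius[OF r] by blast
  have "summable (\<lambda>k. 2 * \<gamma> k * r n' ^ k)"
    using summable_mult[OF \<gamma>_summable[of "r n'"], of 2] r_bounds by (simp add: mult.assoc)
  then obtain N where N: "\<And>m m'. N \<le> m \<Longrightarrow> norm (\<Sum>k\<in>{m..<m'}. 2 * \<gamma> k * r n' ^ k) < \<epsilon>"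
    using \<epsilon> unfolding summable_Cauchy by blast
  define D where "D = max L N"
  have "continuous_on UNIV (bumped_partial_sum \<gamma> P D)"
    unfolding bumped_partial_sum_def by (intro continuous_intros)
  then obtain H where "\<forall>z. cmod z \<le> r n \<longrightarrow> cmod (poly H z) \<le> \<epsilon>"
    "\<forall>\<zeta>\<in>K. \<forall>w. w = of_real (r n') * \<zeta> \<longrightarrow>
       cmod (bumped_partial_sum \<gamma> P D w + w ^ D * poly H w - q \<zeta>) \<le> \<epsilon>"
    using exists_block_near_target[OF r_bounds(1) n'(2) less_imp_le[OF r_bounds(2)] target _ \<epsilon>]
    by blast
  moreover have "(\<Sum>k\<in>{D..<m}. 2 * \<gamma> k * r n' ^ k) \<le> \<epsilon>" for m
    using N[of D m] by (simp add: D_def)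
  ultimately show ?thesis using n'(1) by (intro exI[of _ n'] exI[of _ D] exI[of _ H]) (simp add: D_def)
qed

text \<open>A stage \<open>(n, D, H, P)\<close> consists of the radius index \<open>n\<close>, the new block \<open>z ^ D * H\<close> and the
  sum \<open>P\<close> of the earlier blocks.\<close>
definition construction_stage ::
    "(nat \<Rightarrow> real) \<Rightarrow> (nat \<Rightarrow> real) \<Rightarrow> (nat \<Rightarrow> complex set) \<Rightarrow> (nat \<Rightarrow> complex \<Rightarrow> complex) \<Rightarrow>
      nat \<Rightarrow> nat \<times> nat \<times> complex poly \<times> complex poly \<Rightarrow> bool" where
  "construction_stage r \<gamma> K q j = (\<lambda>(n, D, H, P).
    (\<forall>\<zeta>\<in>K j. \<forall>w. w = of_real (r n) * \<zeta> \<longrightarrow>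
       cmod (bumped_partial_sum \<gamma> P D w + w ^ D * poly H w - q j \<zeta>) \<le> (1/2) ^ j) \<and>
    (\<forall>m. (\<Sum>k\<in>{D..<m}. 2 * \<gamma> k * r n ^ k) \<le> (1/2) ^ j) \<and> (j = 0 \<longrightarrow> P = 0))"

definition construction_step ::
    "(nat \<Rightarrow> real) \<Rightarrow> nat \<Rightarrow> nat \<times> nat \<times> complex poly \<times> complex poly \<Rightarrow>
      nat \<times> nat \<times> complex poly \<times> complex poly \<Rightarrow> bool" where
  "construction_step r j = (\<lambda>(n, D, H, P) (n', D', H', P').
    n < n' \<and> P' = P + monom 1 D * H \<and> D + degree H < D' \<and>
    (\<forall>z. cmod z \<le> r n \<longrightarrow> cmod (poly H' z) \<le> (1/2) ^ Suc j))"

lemma exists_construction_sequence: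
  assumes r: "admissible_radii r"
    and \<gamma>_summable: "\<And>t. 0 \<le> t \<Longrightarrow> t < 1 \<Longrightarrow> summable (\<lambda>k. \<gamma> k * t ^ k)"
    and targets: "\<And>j. circle_target (K j) (q j)"
  shows "\<exists>s. \<forall>j. construction_stage r \<gamma> K q j (s j) \<and> construction_step r j (s j) (s (Suc j))"
proof (rule dependent_nat_choice)
  obtain n' D H where "\<forall>\<zeta>\<in>K 0. \<forall>w. w = of_real (r n') * \<zeta> \<longrightarrow>
      cmod (bumped_partial_sum \<gamma> 0 D w + w ^ D * poly H w - q 0 \<zeta>) \<le> (1/2) ^ 0"
    "\<forall>m. (\<Sum>k\<in>{D..<m}. 2 * \<gamma> k * r n' ^ k) \<le> (1/2) ^ 0"
    using exists_construction_block[OF r \<gamma>_summable targets[of 0],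
        where \<epsilon> = "(1/2) ^ 0" and n = 0 and L = 0 and P = 0] by auto
  then show "\<exists>x. construction_stage r \<gamma> K q 0 x"
    by (intro exI[of _ "(n', D, H, 0)"]) (simp add: construction_stage_def)
next
  fix x j assume "construction_stage r \<gamma> K q j x"
  obtain n D H P where x: "x = (n, D, H, P)" by (cases x) auto
  obtain n' D' H' where "n < n'" "Suc (D + degree H) \<le> D'"
    "\<forall>z. cmod z \<le> r n \<longrightarrow> cmod (poly H' z) \<le> (1/2) ^ Suc j"
    "\<forall>\<zeta>\<in>K (Suc j). \<forall>w. w = of_real (r n') * \<zeta> \<longrightarrow>
       cmod (bumped_partial_sum \<gamma> (P + monom 1 D * H) D' w + w ^ D' * poly H' w - q (Suc j) \<zeta>)
         \<le> (1/2) ^ Suc j"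
    "\<forall>m. (\<Sum>k\<in>{D'..<m}. 2 * \<gamma> k * r n' ^ k) \<le> (1/2) ^ Suc j"
    using exists_construction_block[OF r \<gamma>_summable targets[of "Suc j"],
        where \<epsilon> = "(1/2) ^ Suc j" and n = n and L = "Suc (D + degree H)" and P = "P + monom 1 D * H"]
    by auto
  then show "\<exists>y. construction_stage r \<gamma> K q (Suc j) y \<and> construction_step r j x y"
    by (intro exI[of _ "(n', D', H', P + monom 1 D * H)"])
      (simp add: construction_stage_def construction_step_def x)
qed

lemma exists_abel_construction:
  assumes r: "admissible_radii r" and \<gamma>: "\<And>k. 0 < \<gamma> k"
    and \<gamma>_summable: "\<And>t. 0 \<le> t \<Longrightarrow> t < 1 \<Longrightarrow> summable (\<lambda>k. \<gamma> k * t ^ k)"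
    and targets: "\<And>j. circle_target (K j) (q j)"
    and targets_dense: "\<And>K' \<phi> \<epsilon> M. circle_target K' \<phi> \<Longrightarrow> \<epsilon> > 0 \<Longrightarrow>
      \<exists>j\<ge>M. K' \<subseteq> K j \<and> (\<forall>\<zeta>\<in>K'. cmod (q j \<zeta> - \<phi> \<zeta>) < \<epsilon>)"
  shows "\<exists>n D H P. abel_construction r \<gamma> K q n D H P"
proof -
  have "\<exists>s. \<forall>j. construction_stage r \<gamma> K q j (s j) \<and> construction_step r j (s j) (s (Suc j))"
    by (rule exists_construction_sequence) (fact r \<gamma>_summable targets)+
  then obtain s where s: "\<And>j. construction_stage r \<gamma> K q j (s j)"
    "\<And>j. construction_step r j (s j) (s (Suc j))" by blast
  define n where "n j = fst (s j)" for j
  define D where "D j = fst (snd (s j))" for j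
  define H where "H j = fst (snd (snd (s j)))" for j
  define P where "P j = snd (snd (snd (s j)))" for j
  have "s j = (n j, D j, H j, P j)" for j by (simp add: n_def D_def H_def P_def)
  then have stage: "construction_stage r \<gamma> K q j (n j, D j, H j, P j)"
    and step: "construction_step r j (n j, D j, H j, P j) (n (Suc j), D (Suc j), H (Suc j), P (Suc j))"
    for j
    using s[of j] by (simp_all only:)
  have "abel_construction r \<gamma> K q n D H P"
  proof
    show "strict_mono n" using step by (intro strict_monoI_Suc) (simp add: construction_step_def)
  qed (use r \<gamma> \<gamma>_summable targets targets_dense stage step in
        \<open>auto simp: construction_stage_def construction_step_def\<close>)
  then show ?thesis by blast
qed

lemma exists_abel_universal_rho_large_coeffs:
  assumes r: "admissible_radii r" and \<gamma>: "\<And>k. 0 < \<gamma> k"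
    and \<gamma>_limsup: "limsup (\<lambda>k. ereal (root k (\<gamma> k))) \<le> 1"
  shows "\<exists>f a. abel_universal_rho r f \<and> (\<forall>z\<in>ball 0 1. (\<lambda>k. a k * z ^ k) sums f z) \<and>
    (\<forall>k. \<gamma> k \<le> cmod (a k))"
proof -
  obtain K :: "nat \<Rightarrow> complex set" and q
    where targets: "\<And>j. circle_target (K j) (q j)"
      and dense: "\<And>K' \<phi> \<epsilon> M. circle_target K' \<phi> \<Longrightarrow> \<epsilon> > 0 \<Longrightarrow>
        \<exists>j\<ge>M. K' \<subseteq> K j \<and> (\<forall>\<zeta>\<in>K'. cmod (q j \<zeta> - \<phi> \<zeta>) < \<epsilon>)"
    using obtain_dense_target_sequence by blast
  have \<gamma>_summable: "summable (\<lambda>k. \<gamma> k * t ^ k)" if "0 \<le> t" "t < 1" for t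
    using summable_if_limsup_root_le_1[OF \<gamma>_limsup \<gamma> that] .
  have "\<exists>n D H P. abel_construction r \<gamma> K q n D H P"
    by (rule exists_abel_construction) (fact r \<gamma> \<gamma>_summable targets dense)+
  then obtain n D H P where "abel_construction r \<gamma> K q n D H P" by blast
  then interpret abel_construction r \<gamma> K q n D H P .
  have "\<forall>z\<in>ball 0 1. (\<lambda>k. a k * z ^ k) sums f z" using f_sums by simp
  with abel_universal_rho_f norm_a_ge show ?thesis by blast
qed

section \<open>Coefficients bounded below\<close>

lemma conv_radius_eq_1_if_norm_ge_1:
  fixes a :: "nat \<Rightarrow> complex"
  assumes sums: "\<forall>z\<in>ball 0 1. (\<lambda>k. a k * z ^ k) sums f z" and a: "\<And>k. 1 \<le> norm (a k)"
  shows "conv_radius a = 1"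
proof (rule antisym)
  have "\<not> summable (\<lambda>k. a k * 1 ^ k)"
  proof
    assume "summable (\<lambda>k. a k * 1 ^ k)"
    then have "a \<longlonglongrightarrow> 0" by (simp add: summable_LIMSEQ_zero)
    then have "(\<lambda>k. norm (a k)) \<longlonglongrightarrow> 0" by (rule tendsto_norm_zero)
    then have "\<forall>\<^sub>F k in sequentially. norm (a k) < 1" by (rule order_tendstoD) simp
    then obtain k where "norm (a k) < 1" unfolding eventually_sequentially by blast
    with a[of k] show False by simp
  qed
  then show "conv_radius a \<le> 1" using conv_radius_leI'[of a 1] by (simp add: one_ereal_def)
  show "1 \<le> conv_radius a"
  proof (rule conv_radius_geI_ex')
    fix t :: real assume "0 < t" "ereal t < 1"
    then have "complex_of_real t \<in> ball 0 1" by simp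
    with sums show "summable (\<lambda>k. a k * of_real t ^ k)" using sums_summable by blast
  qed
qed

lemma not_has_HO_gaps_if_norm_ge_1:
  assumes a: "\<And>k. 1 \<le> norm (a k)"
  shows "\<not> has_HO_gaps a"
proof
  assume "has_HO_gaps a"
  then obtain p q :: "nat \<Rightarrow> nat" where pq: "\<And>k. p k < q k \<and> q k \<le> p (Suc k)"
    and L: "Limsup (inf sequentially (principal (\<Union>k. {p k <.. q k})))
               (\<lambda>k. ereal (root k (norm (a k)))) < 1"
    unfolding has_HO_gaps_def by blast
  define I where "I = (\<Union>k. {p k <.. q k})"
  define F where "F = inf sequentially (principal I)"
  have "q k < q (Suc k)" for k using pq[of k] pq[of "Suc k"] by linarith
  then have "strict_mono q" by (rule strict_monoI_Suc)
  have "F \<noteq> bot"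
  proof
    assume "F = bot"
    then have "\<forall>\<^sub>F k in F. False" by simp
    then obtain N where N: "\<And>m. N \<le> m \<Longrightarrow> m \<notin> I"
      unfolding F_def eventually_inf_principal eventually_sequentially by blast
    have "q N \<in> I" using pq[of N] by (auto simp: I_def)
    with N[of "q N"] strict_mono_imp_increasing[OF \<open>strict_mono q\<close>, of N] show False by simp
  qed
  moreover have "\<forall>\<^sub>F k in F. 1 \<le> ereal (root k (norm (a k)))"
    unfolding F_def eventually_inf_principal eventually_sequentially
  proof (intro exI allI impI)
    fix k :: nat assume "1 \<le> k"
    then have "root k 1 \<le> root k (norm (a k))" using a by (intro real_root_le_mono) auto
    with \<open>1 \<le> k\<close> show "1 \<le> ereal (root k (norm (a k)))" by simp
  qed
  ultimately have "1 \<le> Limsup F (\<lambda>k. ereal (root k (norm (a k))))" by (rule le_Limsup)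
  with L show False by (simp add: F_def I_def)
qed

theorem theorem4p5:
  fixes r :: "nat \<Rightarrow> real"
  assumes "admissible_radii r"
  shows "(\<forall>\<gamma> :: nat \<Rightarrow> real. (\<forall>k. \<gamma> k > 0) \<and>
            limsup (\<lambda>k. ereal (root k (\<gamma> k))) \<le> 1 \<longrightarrow>
            (\<exists>f a. abel_universal_rho r f \<and>
                   (\<forall>z\<in>ball 0 1. (\<lambda>k. a k * z ^ k) sums f z) \<and>
                   (\<forall>\<^sub>F k in sequentially. norm (a k) \<ge> \<gamma> k)))
         \<and> (\<exists>f a. abel_universal f \<and> (\<forall>z\<in>ball 0 1. (\<lambda>k. a k * z ^ k) sums f z) \<and>
                 conv_radius a = 1 \<and> \<not> has_HO_gaps a)"
proof (intro conjI allI impI)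
  fix \<gamma> :: "nat \<Rightarrow> real"
  assume "(\<forall>k. \<gamma> k > 0) \<and> limsup (\<lambda>k. ereal (root k (\<gamma> k))) \<le> 1"
  then obtain f a where "abel_universal_rho r f" "\<forall>z\<in>ball 0 1. (\<lambda>k. a k * z ^ k) sums f z"
    "\<forall>k. \<gamma> k \<le> norm (a k)"
    using exists_abel_universal_rho_large_coeffs[OF assms, of \<gamma>] by blast
  then show "\<exists>f a. abel_universal_rho r f \<and> (\<forall>z\<in>ball 0 1. (\<lambda>k. a k * z ^ k) sums f z) \<and>
      (\<forall>\<^sub>F k in sequentially. norm (a k) \<ge> \<gamma> k)"
    using always_eventually by blast
next
  have "root k 1 \<le> 1" for k by (cases k) auto
  then have "limsup (\<lambda>k. ereal (root k 1)) \<le> 1"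
    by (intro Limsup_bounded always_eventually allI) simp
  then obtain f a where f: "abel_universal_rho r f" and sums: "\<forall>z\<in>ball 0 1. (\<lambda>k. a k * z ^ k) sums f z"
    and a: "\<forall>k. 1 \<le> norm (a k)"
    using exists_abel_universal_rho_large_coeffs[OF assms, of "\<lambda>_. 1"] by auto
  have "abel_universal f" using assms f by (auto simp: abel_universal_def)
  with sums a show "\<exists>f a. abel_universal f \<and> (\<forall>z\<in>ball 0 1. (\<lambda>k. a k * z ^ k) sums f z) \<and>
      conv_radius a = 1 \<and> \<not> has_HO_gaps a"
    using conv_radius_eq_1_if_norm_ge_1[OF sums] not_has_HO_gaps_if_norm_ge_1 by blast
qed

end
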